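(* Assume bifurcation assumption (B) with non-critical maximal cells, so $K=\sum_{\sigma\in\Sigma}a_\sigma\neq0$. Let $p\in C$ be non-maximal and critical, and suppose $x_q(\lambda)=X(\lambda)$ for all $q\vartriangleright p$, with $X(\lambda)=D\lambda+R\lambda^2+O(|\lambda|^3)$ the fully synchronous branch. Then generically the $p$-th bifurcation equation has, for $|\lambda|$ small, two solution branches (a transcritical bifurcation) $$x_p(\lambda)=D_p^\pm\lambda+O(|\lambda|^2),$$ with $$D_p^+=-\frac{\ell}{K},\qquad D_p^-=\frac{\ell}{K}\Bigl(1+2\frac{\sum_{\sigma\in\mathcal L_p,\tau\notin\mathcal L_p}f_{\sigma\tau}}{\sum_{\sigma,\tau\in\mathcal L_p}f_{\sigma\tau}}\Bigr)-\frac{\sum_{\sigma\in\mathcal L_p}f_{\sigma\lambda}}{\sum_{\sigma,\tau\in\mathcal L_p}f_{\sigma\tau}}.$$ The branch with coefficient $D_p^+$ is $x_p=X(\lambda)$.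
   Context: Network: finite set of cells $C$, set $\Sigma=\{\sigma_1,\dots,\sigma_n\}$ of pairwise distinct maps $C\to C$ with $\sigma_1=\mathrm{Id}_C$; arrow of type $\sigma$ from $q$ to $p$ iff $\sigma(p)=q$; paths are sets of pairwise distinct cells $\{p_1,\dots,p_k\}$ with $\tau_j(p_{j+1})=p_j$ for some $\tau_j\in\Sigma$; the network is feedforward (no cycles of length $\ge2$). $p\trianglelefteq q$ iff there is a path from $q$ to $p$ (a partial order), $q\vartriangleright p$ means $p\trianglelefteq q$, $p\ne q$; maximal cells are those with $\sigma(p)=p$ for all $\sigma$. Bifurcation setting: $V=\mathbb R$, $f\colon\mathbb R^n\times\mathbb R\to\mathbb R$ smooth with its first $n$ arguments labelled by $\Sigma$, $\gamma_f(x,\lambda)_p=f(x_{\sigma_1(p)},\dots,x_{\sigma_n(p)},\lambda)$; the $p$-th bifurcation equation $\gamma_f(x,\lambda)_p=0$ involves only $x_q$, $q\trianglerighteq p$, and is solved for $x_p$ near $0$ given $x_q(\lambda)$, $q\vartriangleright p$. Coefficients: $a_\sigma=\partial_\sigma f(0,0)$, $f_{\sigma\tau}=\tfrac12\partial_\sigma\partial_\tau f(0,0)$, $f_{\sigma\lambda}=\partial_\sigma\partial_\lambda f(0,0)$, $\ell=\partial_\lambda f(0,0)$, $f_{\lambda\lambda}=\tfrac12\partial_\lambda^2 f(0,0)$. $\mathcal L_p=\{\sigma:\sigma(p)=p\}$; $p$ is critical if $\sum_{\sigma\in\mathcal L_p}a_\sigma=0$. Bifurcation assumption (B): $f(0,0)=0$,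 some cell is critical, exactly the cells with the same $\mathcal L_p$ as a critical cell are critical. Fully synchronous branch: $D=-\ell/K$, $R=-\bigl(\sum_{\sigma,\tau\in\Sigma}f_{\sigma\tau}\ell^2-K\sum_{\sigma\in\Sigma}f_{\sigma\lambda}\ell+K^2f_{\lambda\lambda}\bigr)/K^3$, where $X$ is the unique solution in the synchronous subspace. "Generically" means for an open dense set of Taylor coefficients of $f$ at $(0,0)$. *)

theory Defs
  imports "HOL-Analysis.Analysis" "HOL-Library.Landau_Symbols"
begin

text \<open>The set Sigma of pairwise distinct maps is given by an
  injective family sig :: 's => 'c => 'c indexed by a finite type 's (n = CARD('s)).
  An arrow of type sig i goes from q to p iff sig i p = q.\<close>

definition is_path :: "('s \<Rightarrow> 'c \<Rightarrow> 'c) \<Rightarrow> 'c list \<Rightarrow> bool" where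
  "is_path sig ps \<longleftrightarrow> ps \<noteq> [] \<and> distinct ps \<and>
     (\<forall>j. Suc j < length ps \<longrightarrow> (\<exists>i. sig i (ps ! Suc j) = ps ! j))"

text \<open>A path [p1,...,pk] runs from p1 to pk. A cycle of length >= 2: a path of length >= 2
  together with an arrow from pk back to p1.\<close>
definition feedforward :: "('s \<Rightarrow> 'c \<Rightarrow> 'c) \<Rightarrow> bool" where
  "feedforward sig \<longleftrightarrow>
     \<not> (\<exists>ps. is_path sig ps \<and> length ps \<ge> 2 \<and> (\<exists>i. sig i (hd ps) = last ps))"

definition below :: "('s \<Rightarrow> 'c \<Rightarrow> 'c) \<Rightarrow> 'c \<Rightarrow> 'c \<Rightarrow> bool" where
  "below sig p q \<longleftrightarrow> (\<exists>ps. is_path sig ps \<and> hd ps = q \<and> last ps = p)"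

definition maximal_cell :: "('s \<Rightarrow> 'c \<Rightarrow> 'c) \<Rightarrow> 'c \<Rightarrow> bool" where
  "maximal_cell sig p \<longleftrightarrow> (\<forall>i. sig i p = p)"

definition Lset :: "('s \<Rightarrow> 'c \<Rightarrow> 'c) \<Rightarrow> 'c \<Rightarrow> 's set" where
  "Lset sig p = {i. sig i p = p}"

text \<open>f :: real^'s => real => real; its first n arguments are labelled by Sigma
  (component i <-> sig i), the last one is lambda. Variables: Some i (the sig i argument),
  None (lambda).\<close>

definition pd :: "'s option \<Rightarrow> (real^'s::finite \<Rightarrow> real \<Rightarrow> real) \<Rightarrow> (real^'s \<Rightarrow> real \<Rightarrow> real)" where
  "pd v g = (case v of
      Some i \<Rightarrow> (\<lambda>x l. deriv (\<lambda>t. g (x + t *\<^sub>R axis i 1) l) 0)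
    | None \<Rightarrow> (\<lambda>x l. deriv (\<lambda>t. g x (l + t)) 0))"

definition has_pd :: "'s option \<Rightarrow> (real^'s::finite \<Rightarrow> real \<Rightarrow> real) \<Rightarrow> real^'s \<Rightarrow> real \<Rightarrow> bool" where
  "has_pd v g x l = (case v of
      Some i \<Rightarrow> (\<lambda>t. g (x + t *\<^sub>R axis i 1) l) differentiable (at 0)
    | None \<Rightarrow> (\<lambda>t. g x (l + t)) differentiable (at 0))"

text \<open>Iterated partial derivative: pds [v1,...,vk] g = d_v1 (... (d_vk g)).\<close>
definition pds :: "'s option list \<Rightarrow> (real^'s::finite \<Rightarrow> real \<Rightarrow> real) \<Rightarrow> (real^'s \<Rightarrow> real \<Rightarrow> real)" where
  "pds vs g = foldr pd vs g"

definition smooth_fun :: "(real^'s::finite \<Rightarrow> real \<Rightarrow> real) \<Rightarrow> bool" where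
  "smooth_fun g \<longleftrightarrow> (\<forall>vs. continuous_on UNIV (\<lambda>(x, l). pds vs g x l) \<and>
                         (\<forall>v x l. has_pd v (pds vs g) x l))"

text \<open>Taylor data of f at (0,0): all iterated partial derivatives at the origin,
  indexed by the list of differentiation variables (a fixed homeomorphic rescaling of the
  Taylor coefficients), with the product topology.\<close>
definition taylor :: "(real^'s::finite \<Rightarrow> real \<Rightarrow> real) \<Rightarrow> ('s option list \<Rightarrow> real)" where
  "taylor g = (\<lambda>vs. pds vs g 0 0)"

definition generically ::
  "((real^'s::finite \<Rightarrow> real \<Rightarrow> real) \<Rightarrow> bool) \<Rightarrow> ((real^'s \<Rightarrow> real \<Rightarrow> real) \<Rightarrow> bool) \<Rightarrow> bool" where
  "generically A P \<longleftrightarrow> (\<exists>G :: ('s option list \<Rightarrow> real) set. open G \<and>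
      (\<forall>f. A f \<longrightarrow> taylor f \<in> closure (G \<inter> taylor ` {g. A g})) \<and>
      (\<forall>f. A f \<longrightarrow> taylor f \<in> G \<longrightarrow> P f))"

definition coef_a :: "(real^'s::finite \<Rightarrow> real \<Rightarrow> real) \<Rightarrow> 's \<Rightarrow> real" where
  "coef_a f i = pds [Some i] f 0 0"
definition coef_ff :: "(real^'s::finite \<Rightarrow> real \<Rightarrow> real) \<Rightarrow> 's \<Rightarrow> 's \<Rightarrow> real" where
  "coef_ff f i j = pds [Some i, Some j] f 0 0 / 2"
definition coef_fl :: "(real^'s::finite \<Rightarrow> real \<Rightarrow> real) \<Rightarrow> 's \<Rightarrow> real" where
  "coef_fl f i = pds [Some i, None] f 0 0"
definition coef_l :: "(real^'s::finite \<Rightarrow> real \<Rightarrow> real) \<Rightarrow> real" where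
  "coef_l f = pds [None] f 0 0"
definition coef_ll :: "(real^'s::finite \<Rightarrow> real \<Rightarrow> real) \<Rightarrow> real" where
  "coef_ll f = pds [None, None] f 0 0 / 2"

definition coef_K :: "(real^'s::finite \<Rightarrow> real \<Rightarrow> real) \<Rightarrow> real" where
  "coef_K f = (\<Sum>i\<in>UNIV. coef_a f i)"

definition coef_D :: "(real^'s::finite \<Rightarrow> real \<Rightarrow> real) \<Rightarrow> real" where
  "coef_D f = - coef_l f / coef_K f"

definition coef_R :: "(real^'s::finite \<Rightarrow> real \<Rightarrow> real) \<Rightarrow> real" where
  "coef_R f = - ((\<Sum>i\<in>UNIV. \<Sum>j\<in>UNIV. coef_ff f i j) * (coef_l f)^2
                 - coef_K f * (\<Sum>i\<in>UNIV. coef_fl f i) * coef_l f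
                 + (coef_K f)^2 * coef_ll f) / (coef_K f)^3"

definition critical :: "('s::finite \<Rightarrow> 'c \<Rightarrow> 'c) \<Rightarrow> (real^'s \<Rightarrow> real \<Rightarrow> real) \<Rightarrow> 'c \<Rightarrow> bool" where
  "critical sig f p \<longleftrightarrow> (\<Sum>i\<in>Lset sig p. coef_a f i) = 0"

definition assumption_B :: "('s::finite \<Rightarrow> 'c \<Rightarrow> 'c) \<Rightarrow> (real^'s \<Rightarrow> real \<Rightarrow> real) \<Rightarrow> bool" where
  "assumption_B sig f \<longleftrightarrow> f 0 0 = 0 \<and> (\<exists>p. critical sig f p) \<and>
     (\<forall>q. critical sig f q \<longleftrightarrow> (\<exists>r. critical sig f r \<and> Lset sig q = Lset sig r))"

definition gamma :: "('s::finite \<Rightarrow> 'c \<Rightarrow> 'c) \<Rightarrow> (real^'s \<Rightarrow> real \<Rightarrow> real) \<Rightarrow> ('c \<Rightarrow> real) \<Rightarrow> real \<Rightarrow> 'c \<Rightarrow> real" where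
  "gamma sig f x l p = f (\<chi> i. x (sig i p)) l"

text \<open>Left-hand side of the p-th bifurcation equation as function of x_p, when
  x_q = X(lambda) for all q strictly above p. (Every argument sig i p of gamma_p is either p
  or strictly above p, so the values assigned to other cells are irrelevant.)\<close>
definition peq :: "('s::finite \<Rightarrow> 'c \<Rightarrow> 'c) \<Rightarrow> (real^'s \<Rightarrow> real \<Rightarrow> real) \<Rightarrow> (real \<Rightarrow> real) \<Rightarrow> 'c \<Rightarrow> real \<Rightarrow> real \<Rightarrow> real" where
  "peq sig f X p xp l = gamma sig f ((\<lambda>q. if below sig p q \<and> q \<noteq> p then X l else 0)(p := xp)) l p"

definition Dplus :: "(real^'s::finite \<Rightarrow> real \<Rightarrow> real) \<Rightarrow> real" where
  "Dplus f = - coef_l f / coef_K f"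

definition Dminus :: "('s::finite \<Rightarrow> 'c \<Rightarrow> 'c) \<Rightarrow> (real^'s \<Rightarrow> real \<Rightarrow> real) \<Rightarrow> 'c \<Rightarrow> real" where
  "Dminus sig f p =
    (let L = Lset sig p;
         Q = (\<Sum>i\<in>L. \<Sum>j\<in>L. coef_ff f i j)
     in coef_l f / coef_K f * (1 + 2 * (\<Sum>i\<in>L. \<Sum>j\<in>- L. coef_ff f i j) / Q)
        - (\<Sum>i\<in>L. coef_fl f i) / Q)"

definition transcritical_conclusion ::
  "('s::finite \<Rightarrow> 'c \<Rightarrow> 'c) \<Rightarrow> (real^'s \<Rightarrow> real \<Rightarrow> real) \<Rightarrow> 'c \<Rightarrow> bool" where
  "transcritical_conclusion sig f p \<longleftrightarrow>
    (\<forall>X :: real \<Rightarrow> real.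
      (\<exists>\<eta>>0. \<forall>l. \<bar>l\<bar> < \<eta> \<longrightarrow> f (\<chi> i. X l) l = 0) \<and>
      (\<lambda>l. X l - coef_D f * l - coef_R f * l^2) \<in> O[nhds 0](\<lambda>l. l^3)
      \<longrightarrow>
      (\<exists>\<epsilon>>0. \<exists>\<delta>>0. \<exists>xplus xminus :: real \<Rightarrow> real.
         (\<forall>l. \<bar>l\<bar> < \<epsilon> \<longrightarrow>
             xplus l = X l \<and> \<bar>xplus l\<bar> < \<delta> \<and> \<bar>xminus l\<bar> < \<delta> \<and>
             (l \<noteq> 0 \<longrightarrow> xplus l \<noteq> xminus l) \<and>
             (\<forall>xp. \<bar>xp\<bar> < \<delta> \<longrightarrow> (peq sig f X p xp l = 0 \<longleftrightarrow> xp = xplus l \<or> xp = xminus l))) \<and>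
         (\<lambda>l. xplus l - Dplus f * l) \<in> O[nhds 0](\<lambda>l. l^2) \<and>
         (\<lambda>l. xminus l - Dminus sig f p * l) \<in> O[nhds 0](\<lambda>l. l^2)))"

end

(* The p-th equation sees x_p through its inputs sigma with sigma(p) = p, i.e. sigma in Lset p,
   and the synchronous value X(lambda) through all other inputs, which come from cells strictly
   above p. Along this line it has the zero x_p = X(lambda), whose slope
   s(lambda) = c lambda + O(lambda^2) vanishes at lambda = 0 exactly because p is critical, while
   the second derivative is 2 Q + O(lambda), Q the sum of the f_(sigma tau) over Lset p.
   A zero with nonzero slope s and second derivative close to 2 Q has exactly one further zero
   nearby, at offset -s/Q + O(s lambda); this is the second branch, with coefficient
   D - c/Q = D_p^-. Genericity means that Q, K and c do not vanish: an open condition on the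
   Taylor coefficients, and a dense one, since adding a0 x_i1 + a x_i0^2 + b x_i0 lambda with
   i0 in Lset p and i1 not in Lset p moves K, Q and c independently while keeping (B) and the
   criticality of p. *)

theory Submission
  imports Defs
begin

section \<open>Partial derivatives of smooth functions\<close>

definition unit_dir :: "'s option \<Rightarrow> (real^'s::finite) \<times> real" where
  "unit_dir v = (case v of Some i \<Rightarrow> (axis i 1, 0) | None \<Rightarrow> (0, 1))"

definition coord :: "'s option \<Rightarrow> (real^'s::finite) \<times> real \<Rightarrow> real" where
  "coord v z = (case v of Some i \<Rightarrow> fst z $ i | None \<Rightarrow> snd z)"

definition l1_norm :: "(real^'s::finite) \<times> real \<Rightarrow> real" where
  "l1_norm z = (\<Sum>v\<in>UNIV. \<bar>coord (v::'s option) z\<bar>)"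

definition pds_at :: "'s option list \<Rightarrow> (real^'s::finite \<Rightarrow> real \<Rightarrow> real) \<Rightarrow> (real^'s) \<times> real \<Rightarrow> real" where
  "pds_at vs f z = pds vs f (fst z) (snd z)"

lemma coord_add [simp]: "coord v (a + b) = coord v a + coord v b"
  and coord_diff [simp]: "coord v (a - b) = coord v a - coord v b"
  and coord_scaleR [simp]: "coord v (c *\<^sub>R a) = c * coord v a"
  and coord_zero [simp]: "coord v 0 = 0"
  by (cases v; simp add: coord_def)+

lemma coord_unit_dir: "coord u (unit_dir v) = (if u = v then 1 else 0)"
  by (cases u; cases v) (auto simp: coord_def unit_dir_def axis_def)

lemma sum_UNIV_option: "(\<Sum>v\<in>(UNIV::'s::finite option set). g v) = g None + (\<Sum>i\<in>UNIV. g (Some i))"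
proof -
  have "(\<Sum>v\<in>(UNIV::'s option set). g v) = g None + (\<Sum>v\<in>range Some. g v)"
    by (simp add: UNIV_option_conv)
  also have "(\<Sum>v\<in>range Some. g v) = (\<Sum>i\<in>UNIV. g (Some i))"
    by (subst sum.reindex) (auto simp: inj_on_def)
  finally show ?thesis .
qed

lemma coord_expansion: "z = (\<Sum>v\<in>UNIV. coord v z *\<^sub>R unit_dir (v::'s::finite option))"
proof -
  obtain x l where z: "z = (x, l)" by (cases z)
  have "(\<Sum>i\<in>UNIV. x $ i *\<^sub>R axis i (1::real)) = x"
    by (simp add: vec_eq_iff axis_def sum.delta' if_distrib cong: if_cong)
  then show ?thesis
    unfolding sum_UNIV_option
    by (simp add: z coord_def unit_dir_def fst_sum snd_sum scaleR_Pair sum_prod)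
qed

lemma abs_coord_le_norm: "\<bar>coord v z\<bar> \<le> norm z"
proof (cases v)
  case None
  then show ?thesis
    by (cases z) (simp add: coord_def norm_Pair real_le_rsqrt)
next
  case (Some i)
  obtain x l where z: "z = (x, l)" by (cases z)
  have "\<bar>x $ i\<bar> \<le> norm x" by (rule component_le_norm_cart)
  also have "norm x \<le> norm (x, l)"
    by (simp add: norm_Pair real_le_rsqrt)
  finally show ?thesis using Some z by (simp add: coord_def)
qed

lemma norm_unit_dir: "norm (unit_dir v) = 1"
  by (cases v) (auto simp: unit_dir_def norm_Pair)

lemma norm_le_l1_norm: "norm z \<le> l1_norm z"
proof -
  have "norm z = norm (\<Sum>v\<in>UNIV. coord v z *\<^sub>R unit_dir v)"
    by (subst coord_expansion) simp
  also have "\<dots> \<le> (\<Sum>v\<in>UNIV. norm (coord v z *\<^sub>R unit_dir v))"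
    by (rule norm_sum)
  also have "\<dots> = l1_norm z"
    by (simp add: l1_norm_def norm_unit_dir)
  finally show ?thesis .
qed

lemma l1_norm_le_norm: "l1_norm z \<le> real CARD('s option) * norm (z :: (real^'s::finite) \<times> real)"
  unfolding l1_norm_def using sum_mono[of UNIV "\<lambda>v. \<bar>coord v z\<bar>" "\<lambda>_. norm z"]
  by (simp add: abs_coord_le_norm)

lemma l1_norm_nonneg: "l1_norm z \<ge> 0"
  by (simp add: l1_norm_def sum_nonneg)

lemma l1_norm_scaleR: "l1_norm (t *\<^sub>R z) = \<bar>t\<bar> * l1_norm z"
  by (simp add: l1_norm_def abs_mult sum_distrib_left)

lemma bounded_linear_coord_sum: "bounded_linear (\<lambda>h. \<Sum>v\<in>UNIV. coord (v::'s::finite option) h * c v)"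
proof (rule bounded_linear_intro[where K = "\<Sum>v\<in>UNIV. \<bar>c v\<bar>"])
  fix x y :: "(real^'s) \<times> real" and r :: real
  show "(\<Sum>v\<in>UNIV. coord v (x + y) * c v) = (\<Sum>v\<in>UNIV. coord v x * c v) + (\<Sum>v\<in>UNIV. coord v y * c v)"
    by (simp add: distrib_right sum.distrib)
  show "(\<Sum>v\<in>UNIV. coord v (r *\<^sub>R x) * c v) = r *\<^sub>R (\<Sum>v\<in>UNIV. coord v x * c v)"
    by (simp add: sum_distrib_left mult.assoc)
  have "norm (\<Sum>v\<in>UNIV. coord v x * c v) \<le> (\<Sum>v\<in>UNIV. \<bar>coord v x * c v\<bar>)"
    using sum_abs[of "\<lambda>v. coord v x * c v" UNIV] by simp
  also have "\<dots> \<le> (\<Sum>v\<in>UNIV. norm x * \<bar>c v\<bar>)"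
    by (rule sum_mono) (simp add: abs_mult abs_coord_le_norm mult_right_mono)
  finally show "norm (\<Sum>v\<in>UNIV. coord v x * c v) \<le> norm x * (\<Sum>v\<in>UNIV. \<bar>c v\<bar>)"
    by (simp add: sum_distrib_left)
qed

lemma eventually_close_if_continuous:
  fixes g :: "'a::t2_space \<Rightarrow> real"
  assumes "continuous_on UNIV g" and "e > 0"
  shows "\<forall>\<^sub>F z in nhds z0. \<bar>g z - g z0\<bar> < e"
proof -
  have "isCont g z0"
    using assms(1) continuous_on_eq_continuous_at[OF open_UNIV] by blast
  then have "(g \<longlongrightarrow> g z0) (nhds z0)"
    by (simp add: isCont_def tendsto_nhds_iff)
  from tendstoD[OF this assms(2)] show ?thesis
    by (simp add: dist_real_def)
qed

lemma eventually_mult_abs_less: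
  fixes C r :: real
  assumes "r > 0"
  shows "\<forall>\<^sub>F l in nhds 0. C * \<bar>l\<bar> < r"
  unfolding eventually_nhds_metric
proof (intro exI[of _ "r / (\<bar>C\<bar> + 1)"] conjI allI impI)
  show "r / (\<bar>C\<bar> + 1) > 0"
    using assms by simp
  fix l :: real assume "dist l 0 < r / (\<bar>C\<bar> + 1)"
  then have "\<bar>l\<bar> * (\<bar>C\<bar> + 1) < r"
    by (simp add: pos_less_divide_eq)
  moreover have "C * \<bar>l\<bar> \<le> \<bar>C\<bar> * \<bar>l\<bar>"
    by (simp add: mult_right_mono)
  then have "C * \<bar>l\<bar> \<le> \<bar>l\<bar> * (\<bar>C\<bar> + 1)"
    by (simp add: algebra_simps)
  ultimately show "C * \<bar>l\<bar> < r"
    by linarith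
qed

lemma eventually_sum_le_bound:
  fixes g :: "'i \<Rightarrow> 'z \<Rightarrow> real"
  assumes "finite I" "\<And>i. i \<in> I \<Longrightarrow> \<exists>M. \<forall>\<^sub>F z in F. \<bar>g i z\<bar> \<le> M * B z"
  shows "\<exists>M. \<forall>\<^sub>F z in F. \<bar>\<Sum>i\<in>I. g i z\<bar> \<le> M * B z"
  using assms
proof (induction I rule: finite_induct)
  case empty
  show ?case by (intro exI[of _ 0]) simp
next
  case (insert a I)
  obtain M1 where "\<forall>\<^sub>F z in F. \<bar>g a z\<bar> \<le> M1 * B z"
    using insert.prems by blast
  moreover obtain M2 where "\<forall>\<^sub>F z in F. \<bar>\<Sum>i\<in>I. g i z\<bar> \<le> M2 * B z"
    using insert.IH insert.prems by blast
  ultimately have "\<forall>\<^sub>F z in F. \<bar>\<Sum>i\<in>insert a I. g i z\<bar> \<le> (M1 + M2) * B z"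
  proof eventually_elim
    case (elim z)
    have "\<bar>\<Sum>i\<in>insert a I. g i z\<bar> \<le> \<bar>g a z\<bar> + \<bar>\<Sum>i\<in>I. g i z\<bar>"
      using insert.hyps abs_triangle_ineq by simp
    with elim show ?case
      by (simp add: distrib_right)
  qed
  then show ?case by blast
qed

lemma increment_along_unit_dir:
  fixes g :: "(real^'s::finite) \<times> real \<Rightarrow> real"
  assumes der: "\<And>t. ((\<lambda>t. g (z + t *\<^sub>R unit_dir w)) has_real_derivative dg (z + t *\<^sub>R unit_dir w)) (at t)"
    and close: "\<And>t. t \<in> closed_segment 0 c \<Longrightarrow> \<bar>dg (z + t *\<^sub>R unit_dir w) - d0\<bar> \<le> \<epsilon>"
  shows "\<bar>g (z + c *\<^sub>R unit_dir w) - g z - c * d0\<bar> \<le> \<epsilon> * \<bar>c\<bar>"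
proof -
  define k where "k t = g (z + t *\<^sub>R unit_dir w) - t * d0" for t
  have "(k has_real_derivative dg (z + t *\<^sub>R unit_dir w) - d0) (at t)" for t
    unfolding k_def by (rule derivative_eq_intros der refl)+ simp
  then have "norm (k c - k 0) \<le> \<epsilon> * norm (c - 0)"
    by (intro field_differentiable_bound[where S = "closed_segment 0 c"])
       (use close in \<open>auto intro: has_field_derivative_at_within\<close>)
  then show ?thesis by (simp add: k_def)
qed

text \<open>Adding one coordinate of the increment at a time reduces the estimate to the mean value
  theorem on segments parallel to the axes.\<close>

lemma increment_estimate:
  fixes g :: "(real^'s::finite) \<times> real \<Rightarrow> real"
  assumes der: "\<And>z v t. ((\<lambda>t. g (z + t *\<^sub>R unit_dir v)) has_real_derivative dg v (z + t *\<^sub>R unit_dir v)) (at t)"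
    and close: "\<And>\<xi> v. dist \<xi> z0 < \<delta> \<Longrightarrow> \<bar>dg v \<xi> - dg v z0\<bar> \<le> \<epsilon>"
    and "finite S" and "\<And>v. v \<notin> S \<Longrightarrow> coord v h = 0" and "l1_norm h < \<delta>"
  shows "\<bar>g (z0 + h) - g z0 - (\<Sum>v\<in>S. coord v h * dg v z0)\<bar> \<le> \<epsilon> * (\<Sum>v\<in>S. \<bar>coord v h\<bar>)"
  using assms(3-5)
proof (induction S arbitrary: h rule: finite_induct)
  case empty
  then have "h = 0" by (subst coord_expansion) simp
  then show ?case by simp
next
  case (insert w S)
  define c where "c = coord w h"
  define h' where "h' = h - c *\<^sub>R unit_dir w"
  have coord_h': "coord v h' = (if v = w then 0 else coord v h)" for v
    by (simp add: h'_def coord_unit_dir c_def)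
  have "l1_norm h' \<le> l1_norm h"
    unfolding l1_norm_def by (rule sum_mono) (simp add: coord_h')
  then have IH: "\<bar>g (z0 + h') - g z0 - (\<Sum>v\<in>S. coord v h' * dg v z0)\<bar> \<le> \<epsilon> * (\<Sum>v\<in>S. \<bar>coord v h'\<bar>)"
    using insert by (intro insert.IH) (auto simp: coord_h')
  have seg: "\<bar>dg w (z0 + h' + t *\<^sub>R unit_dir w) - dg w z0\<bar> \<le> \<epsilon>" if "t \<in> closed_segment 0 c" for t
  proof (rule close)
    have "\<bar>t\<bar> \<le> \<bar>c\<bar>"
      using that by (auto simp: closed_segment_eq_real_ivl split: if_splits)
    then have "l1_norm (h' + t *\<^sub>R unit_dir w) \<le> l1_norm h"
      unfolding l1_norm_def by (intro sum_mono) (simp add: coord_h' coord_unit_dir c_def)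
    then show "dist (z0 + h' + t *\<^sub>R unit_dir w) z0 < \<delta>"
      using norm_le_l1_norm[of "h' + t *\<^sub>R unit_dir w"] insert.prems(2) by (simp add: dist_norm)
  qed
  have "\<bar>g (z0 + h' + c *\<^sub>R unit_dir w) - g (z0 + h') - c * dg w z0\<bar> \<le> \<epsilon> * \<bar>c\<bar>"
    by (rule increment_along_unit_dir[OF der seg])
  then have "\<bar>g (z0 + h) - g (z0 + h') - c * dg w z0\<bar> \<le> \<epsilon> * \<bar>c\<bar>"
    by (simp add: h'_def)
  moreover have "(\<Sum>v\<in>S. coord v h' * dg v z0) = (\<Sum>v\<in>S. coord v h * dg v z0)"
    and "(\<Sum>v\<in>S. \<bar>coord v h'\<bar>) = (\<Sum>v\<in>S. \<bar>coord v h\<bar>)"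
    using insert.hyps by (auto simp: coord_h' intro: sum.cong)
  ultimately show ?case
    using IH insert.hyps by (simp add: c_def distrib_left)
qed

lemma frechet_from_partials:
  fixes g :: "(real^'s::finite) \<times> real \<Rightarrow> real"
  assumes der: "\<And>z v t. ((\<lambda>t. g (z + t *\<^sub>R unit_dir v)) has_real_derivative dg v (z + t *\<^sub>R unit_dir v)) (at t)"
    and cont: "\<And>v. continuous_on UNIV (dg v)"
  shows "(g has_derivative (\<lambda>h. \<Sum>v\<in>UNIV. coord v h * dg v z0)) (at z0)"
  unfolding has_derivative_at_alt
proof (intro conjI allI impI)
  show "bounded_linear (\<lambda>h. \<Sum>v\<in>UNIV. coord v h * dg v z0)"
    by (rule bounded_linear_coord_sum)
  fix e :: real assume "e > 0"
  define C where "C = real CARD('s option)"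
  have C: "C > 0" by (simp add: C_def)
  have "\<forall>\<^sub>F \<xi> in nhds z0. \<forall>v. \<bar>dg v \<xi> - dg v z0\<bar> < e / C"
    using \<open>e > 0\<close> C by (intro eventually_all_finite eventually_close_if_continuous cont) simp
  then obtain \<delta> where \<delta>: "\<delta> > 0" "\<And>\<xi> v. dist \<xi> z0 < \<delta> \<Longrightarrow> \<bar>dg v \<xi> - dg v z0\<bar> \<le> e / C"
    unfolding eventually_nhds_metric by (metis less_imp_le)
  show "\<exists>d>0. \<forall>y. norm (y - z0) < d \<longrightarrow>
      norm (g y - g z0 - (\<Sum>v\<in>UNIV. coord v (y - z0) * dg v z0)) \<le> e * norm (y - z0)"
  proof (intro exI[of _ "\<delta> / C"] conjI allI impI)
    show "\<delta> / C > 0" using \<delta> C by simp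
    fix y assume y: "norm (y - z0) < \<delta> / C"
    have l1: "l1_norm (y - z0) \<le> C * norm (y - z0)"
      unfolding C_def by (rule l1_norm_le_norm)
    also have "\<dots> < \<delta>" using y C by (simp add: field_simps)
    finally have "l1_norm (y - z0) < \<delta>" .
    then have "\<bar>g (z0 + (y - z0)) - g z0 - (\<Sum>v\<in>UNIV. coord v (y - z0) * dg v z0)\<bar>
        \<le> e / C * (\<Sum>v\<in>UNIV. \<bar>coord v (y - z0)\<bar>)"
      by (intro increment_estimate[OF der \<delta>(2)]) simp_all
    also have "\<dots> = e / C * l1_norm (y - z0)"
      by (simp only: l1_norm_def)
    also have "\<dots> \<le> e / C * (C * norm (y - z0))"
      using l1 \<open>e > 0\<close> C by (intro mult_left_mono) auto
    finally show "norm (g y - g z0 - (\<Sum>v\<in>UNIV. coord v (y - z0) * dg v z0)) \<le> e * norm (y - z0)"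
      using C by simp
  qed
qed

lemma pds_at_Nil: "pds_at [] f z = f (fst z) (snd z)"
  by (simp add: pds_at_def pds_def)

lemma pds_at_Cons: "pds_at (v # vs) f z = deriv (\<lambda>t. pds_at vs f (z + t *\<^sub>R unit_dir v)) 0"
  by (cases v) (auto simp: pds_at_def pds_def pd_def unit_dir_def scaleR_Pair)

lemma continuous_on_pds_at: "smooth_fun f \<Longrightarrow> continuous_on UNIV (pds_at vs f)"
  by (simp add: smooth_fun_def pds_at_def case_prod_beta')

lemma has_real_derivative_pds_at_unit_dir:
  assumes "smooth_fun f"
  shows "((\<lambda>t. pds_at vs f (z + t *\<^sub>R unit_dir v)) has_real_derivative
           pds_at (v # vs) f (z + t0 *\<^sub>R unit_dir v)) (at t0)"
proof -
  let ?z = "z + t0 *\<^sub>R unit_dir v"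
  let ?h = "\<lambda>t. pds_at vs f (?z + t *\<^sub>R unit_dir v)"
  have "has_pd v (pds vs f) (fst ?z) (snd ?z)"
    using assms by (simp add: smooth_fun_def)
  then have "?h differentiable (at 0)"
    by (cases v) (auto simp: pds_at_def has_pd_def unit_dir_def scaleR_Pair)
  then have "(?h has_real_derivative pds_at (v # vs) f ?z) (at 0)"
    by (simp add: DERIV_deriv_iff_real_differentiable pds_at_Cons)
  then have "((\<lambda>t. ?h (t + - t0)) has_real_derivative pds_at (v # vs) f ?z) (at t0)"
    using DERIV_shift[of ?h _ t0 "- t0"] by simp
  then show ?thesis
    by (simp add: algebra_simps)
qed

lemma has_derivative_pds_at:
  assumes "smooth_fun f"
  shows "(pds_at vs f has_derivative (\<lambda>h. \<Sum>v\<in>UNIV. coord v h * pds_at (v # vs) f z0)) (at z0)"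
  using assms by (intro frechet_from_partials has_real_derivative_pds_at_unit_dir continuous_on_pds_at)

lemma has_real_derivative_pds_at_line:
  assumes "smooth_fun f"
  shows "((\<lambda>t. pds_at vs f (z + t *\<^sub>R w)) has_real_derivative
           (\<Sum>v\<in>UNIV. coord v w * pds_at (v # vs) f (z + t *\<^sub>R w))) (at t)"
proof -
  have "((\<lambda>t. z + t *\<^sub>R w) has_derivative (\<lambda>s. s *\<^sub>R w)) (at t)"
    by (rule derivative_eq_intros refl)+ simp
  from has_derivative_compose[OF this has_derivative_pds_at[OF assms]]
  have "((\<lambda>t. pds_at vs f (z + t *\<^sub>R w)) has_derivative
      (\<lambda>s. \<Sum>v\<in>UNIV. coord v (s *\<^sub>R w) * pds_at (v # vs) f (z + t *\<^sub>R w))) (at t)"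
    by (simp add: o_def)
  moreover have "(\<lambda>s. \<Sum>v\<in>UNIV. coord v (s *\<^sub>R w) * pds_at (v # vs) f (z + t *\<^sub>R w))
     = (*) (\<Sum>v\<in>UNIV. coord v w * pds_at (v # vs) f (z + t *\<^sub>R w))"
    by (auto simp: fun_eq_iff sum_distrib_left mult_ac)
  ultimately show ?thesis by (simp add: has_field_derivative_def)
qed

lemma mixed_difference_mvt:
  fixes F Fs Fst :: "real \<Rightarrow> real \<Rightarrow> real"
  assumes "h > 0"
    and ds: "\<And>s t. ((\<lambda>s. F s t) has_real_derivative Fs s t) (at s)"
    and dt: "\<And>s t. ((\<lambda>t. Fs s t) has_real_derivative Fst s t) (at t)"
  shows "\<exists>s t. 0 < s \<and> s < h \<and> 0 < t \<and> t < h \<and> F h h - F h 0 - F 0 h + F 0 0 = h * h * Fst s t"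
proof -
  have "((\<lambda>s. F s h - F s 0) has_real_derivative Fs s h - Fs s 0) (at s)" for s
    by (intro DERIV_diff ds)
  from MVT2[OF \<open>h > 0\<close> this] obtain s where s: "0 < s" "s < h"
    "F h h - F h 0 - (F 0 h - F 0 0) = (h - 0) * (Fs s h - Fs s 0)"
    by blast
  from MVT2[OF \<open>h > 0\<close> dt] obtain t where t: "0 < t" "t < h"
    "Fs s h - Fs s 0 = (h - 0) * Fst s t"
    by blast
  show ?thesis
    using s t by (intro exI[of _ s] exI[of _ t]) (simp add: algebra_simps)
qed

text \<open>Both orders of differentiation compute the same mixed second difference, so they agree up to
  points arbitrarily close to z; continuity of the second partials then gives Schwarz's theorem.\<close>

lemma pds_at_mixed_difference:
  assumes sm: "smooth_fun f" and h: "h > 0"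
  shows "\<exists>p1 p2. norm (p1 - z) \<le> 2 * h \<and> norm (p2 - z) \<le> 2 * h \<and>
           pds_at (v # u # vs) f p1 = pds_at (u # v # vs) f p2"
proof -
  define pt where "pt s t = z + s *\<^sub>R unit_dir u + t *\<^sub>R unit_dir v" for s t
  have ds: "((\<lambda>s. pds_at w f (pt s t)) has_real_derivative pds_at (u # w) f (pt s t)) (at s)" for w s t
    using has_real_derivative_pds_at_unit_dir[OF sm, of w "z + t *\<^sub>R unit_dir v" u s]
    by (simp add: pt_def add_ac)
  have dt: "((\<lambda>t. pds_at w f (pt s t)) has_real_derivative pds_at (v # w) f (pt s t)) (at t)" for w s t
    using has_real_derivative_pds_at_unit_dir[OF sm, of w "z + s *\<^sub>R unit_dir u" v t]
    by (simp add: pt_def add_ac)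
  obtain s1 t1 where st1: "0 < s1" "s1 < h" "0 < t1" "t1 < h"
    "pds_at vs f (pt h h) - pds_at vs f (pt h 0) - pds_at vs f (pt 0 h) + pds_at vs f (pt 0 0)
       = h * h * pds_at (v # u # vs) f (pt s1 t1)"
    using mixed_difference_mvt[OF h ds dt] by blast
  obtain t2 s2 where st2: "0 < t2" "t2 < h" "0 < s2" "s2 < h"
    "pds_at vs f (pt h h) - pds_at vs f (pt 0 h) - pds_at vs f (pt h 0) + pds_at vs f (pt 0 0)
       = h * h * pds_at (u # v # vs) f (pt s2 t2)"
    using mixed_difference_mvt[OF h dt ds] by blast
  have close: "norm (pt s t - z) \<le> 2 * h" if "0 < s" "s < h" "0 < t" "t < h" for s t
  proof -
    have "norm (pt s t - z) = norm (s *\<^sub>R unit_dir u + t *\<^sub>R unit_dir v)"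
      by (simp add: pt_def)
    also have "\<dots> \<le> norm (s *\<^sub>R unit_dir u) + norm (t *\<^sub>R unit_dir v)"
      by (rule norm_triangle_ineq)
    finally show ?thesis
      using that by (simp add: norm_unit_dir)
  qed
  have "h * h * pds_at (v # u # vs) f (pt s1 t1) = h * h * pds_at (u # v # vs) f (pt s2 t2)"
    using st1(5) st2(5) by (simp add: algebra_simps)
  then have "pds_at (v # u # vs) f (pt s1 t1) = pds_at (u # v # vs) f (pt s2 t2)"
    using h by simp
  with st1 st2 close[of s1 t1] close[of s2 t2] show ?thesis
    by blast
qed

lemma pds_at_swap:
  assumes sm: "smooth_fun f"
  shows "pds_at (u # v # vs) f z = pds_at (v # u # vs) f z"
proof -
  have "\<bar>pds_at (u # v # vs) f z - pds_at (v # u # vs) f z\<bar> \<le> 0 + e" if "e > 0" for e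
  proof -
    have "\<forall>\<^sub>F p in nhds z. \<bar>pds_at (u # v # vs) f p - pds_at (u # v # vs) f z\<bar> < e / 2
        \<and> \<bar>pds_at (v # u # vs) f p - pds_at (v # u # vs) f z\<bar> < e / 2"
      using sm \<open>e > 0\<close> by (intro eventually_conj eventually_close_if_continuous continuous_on_pds_at) auto
    then obtain \<delta> where "\<delta> > 0" and \<delta>: "\<And>p. dist p z < \<delta> \<Longrightarrow>
        \<bar>pds_at (u # v # vs) f p - pds_at (u # v # vs) f z\<bar> < e / 2
        \<and> \<bar>pds_at (v # u # vs) f p - pds_at (v # u # vs) f z\<bar> < e / 2"
      unfolding eventually_nhds_metric by blast
    have "\<delta> / 4 > 0"
      using \<open>\<delta> > 0\<close> by simp
    from pds_at_mixed_difference[OF sm this, of z v u vs]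
    obtain p1 p2 where "norm (p1 - z) \<le> 2 * (\<delta> / 4)" "norm (p2 - z) \<le> 2 * (\<delta> / 4)"
      and eq: "pds_at (v # u # vs) f p1 = pds_at (u # v # vs) f p2"
      by blast
    then have "dist p1 z < \<delta>" "dist p2 z < \<delta>"
      using \<open>\<delta> > 0\<close> by (auto simp: dist_norm)
    with \<delta> have "\<bar>pds_at (v # u # vs) f p1 - pds_at (v # u # vs) f z\<bar> < e / 2"
      "\<bar>pds_at (u # v # vs) f p2 - pds_at (u # v # vs) f z\<bar> < e / 2"
      by blast+
    moreover have "\<bar>pds_at (u # v # vs) f z - pds_at (v # u # vs) f z\<bar>
        \<le> \<bar>pds_at (v # u # vs) f p1 - pds_at (v # u # vs) f z\<bar> + \<bar>pds_at (u # v # vs) f p2 - pds_at (u # v # vs) f z\<bar>"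
      using eq by linarith
    ultimately show ?thesis
      by linarith
  qed
  then have "\<bar>pds_at (u # v # vs) f z - pds_at (v # u # vs) f z\<bar> \<le> 0"
    by (rule field_le_epsilon)
  then show ?thesis
    by simp
qed

lemma abs_coord_sum_le:
  assumes "\<And>v. \<bar>d v\<bar> \<le> B"
  shows "\<bar>\<Sum>v\<in>UNIV. coord v z * d v\<bar> \<le> B * l1_norm z"
proof -
  have "\<bar>\<Sum>v\<in>UNIV. coord v z * d v\<bar> \<le> (\<Sum>v\<in>UNIV. \<bar>coord v z\<bar> * B)"
    by (rule order_trans[OF sum_abs sum_mono]) (simp add: abs_mult assms mult_left_mono)
  also have "\<dots> = B * l1_norm z"
    by (simp add: l1_norm_def sum_distrib_left mult.commute)
  finally show ?thesis .
qed

lemma increment_along_ray: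
  assumes sm: "smooth_fun f"
    and bound: "\<And>t. t \<in> {0..1} \<Longrightarrow> \<bar>\<Sum>v\<in>UNIV. coord v z * (pds_at (v # vs) f (t *\<^sub>R z) - c v)\<bar> \<le> B"
  shows "\<bar>pds_at vs f z - pds_at vs f 0 - (\<Sum>v\<in>UNIV. coord v z * c v)\<bar> \<le> B"
proof -
  define \<psi> where "\<psi> t = pds_at vs f (0 + t *\<^sub>R z) - t * (\<Sum>v\<in>UNIV. coord v z * c v)" for t
  have d: "(\<psi> has_real_derivative (\<Sum>v\<in>UNIV. coord v z * (pds_at (v # vs) f (t *\<^sub>R z) - c v))) (at t)" for t
    unfolding \<psi>_def
    by (rule derivative_eq_intros has_real_derivative_pds_at_line[OF sm] refl)+
       (simp add: sum_subtractf[symmetric] right_diff_distrib)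
  have "norm (\<psi> 1 - \<psi> 0) \<le> B * norm (1 - (0::real))"
    by (rule field_differentiable_bound[where S = "{0..1}"])
       (use d bound in \<open>auto intro: has_field_derivative_at_within\<close>)
  then show ?thesis
    by (simp add: \<psi>_def)
qed

lemma pds_at_lipschitz_at_0:
  assumes sm: "smooth_fun f"
  shows "\<exists>M. \<forall>\<^sub>F z in nhds 0. \<bar>pds_at vs f z - pds_at vs f 0\<bar> \<le> M * l1_norm z"
proof -
  have "\<forall>\<^sub>F \<xi> in nhds 0. \<forall>v. \<bar>pds_at (v # vs) f \<xi> - pds_at (v # vs) f 0\<bar> < 1"
    using sm by (intro eventually_all_finite eventually_close_if_continuous continuous_on_pds_at) auto
  then obtain \<delta> where "\<delta> > 0"
    and \<delta>: "\<And>\<xi> v. dist \<xi> 0 < \<delta> \<Longrightarrow> \<bar>pds_at (v # vs) f \<xi> - pds_at (v # vs) f 0\<bar> < 1"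
    unfolding eventually_nhds_metric by blast
  define M where "M = (\<Sum>v\<in>UNIV. \<bar>pds_at (v # vs) f 0\<bar> + 1)"
  have M: "\<bar>pds_at (v # vs) f 0\<bar> + 1 \<le> M" for v
    unfolding M_def by (rule member_le_sum) auto
  have "\<bar>pds_at vs f z - pds_at vs f 0\<bar> \<le> M * l1_norm z" if z: "dist z 0 < \<delta>" for z
  proof -
    have "\<bar>\<Sum>v\<in>UNIV. coord v z * (pds_at (v # vs) f (t *\<^sub>R z) - 0)\<bar> \<le> M * l1_norm z"
      if "t \<in> {0..1}" for t
    proof (rule abs_coord_sum_le)
      fix v
      have "norm (t *\<^sub>R z) \<le> norm z"
        using that by (simp add: mult_left_le_one_le)
      then have "\<bar>pds_at (v # vs) f (t *\<^sub>R z) - pds_at (v # vs) f 0\<bar> < 1"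
        using z by (intro \<delta>) simp
      moreover have "\<bar>pds_at (v # vs) f (t *\<^sub>R z)\<bar> - \<bar>pds_at (v # vs) f 0\<bar>
          \<le> \<bar>pds_at (v # vs) f (t *\<^sub>R z) - pds_at (v # vs) f 0\<bar>"
        by (rule abs_triangle_ineq2)
      ultimately show "\<bar>pds_at (v # vs) f (t *\<^sub>R z) - 0\<bar> \<le> M"
        using M[of v] by simp
    qed
    from increment_along_ray[OF sm this] show ?thesis
      by simp
  qed
  then show ?thesis
    unfolding eventually_nhds_metric using \<open>\<delta> > 0\<close> by blast
qed

lemma pds_at_taylor1_at_0:
  assumes sm: "smooth_fun f"
  shows "\<exists>M. \<forall>\<^sub>F z in nhds 0.
     \<bar>pds_at vs f z - pds_at vs f 0 - (\<Sum>v\<in>UNIV. coord v z * pds_at (v # vs) f 0)\<bar> \<le> M * (l1_norm z)^2"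
proof -
  have "\<forall>v. \<exists>M. \<forall>\<^sub>F z in nhds 0. \<bar>pds_at (v # vs) f z - pds_at (v # vs) f 0\<bar> \<le> M * l1_norm z"
    using pds_at_lipschitz_at_0[OF sm] by blast
  then obtain Mv where "\<And>v. \<forall>\<^sub>F z in nhds 0. \<bar>pds_at (v # vs) f z - pds_at (v # vs) f 0\<bar> \<le> Mv v * l1_norm z"
    by metis
  then have "\<forall>\<^sub>F z in nhds 0. \<forall>v. \<bar>pds_at (v # vs) f z - pds_at (v # vs) f 0\<bar> \<le> Mv v * l1_norm z"
    by (rule eventually_all_finite)
  then obtain \<delta> where "\<delta> > 0" and \<delta>: "\<And>\<xi> v. dist \<xi> 0 < \<delta> \<Longrightarrow>
      \<bar>pds_at (v # vs) f \<xi> - pds_at (v # vs) f 0\<bar> \<le> Mv v * l1_norm \<xi>"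
    unfolding eventually_nhds_metric by blast
  define M where "M = (\<Sum>v\<in>UNIV. \<bar>Mv v\<bar>)"
  have M: "\<bar>Mv v\<bar> \<le> M" for v
    unfolding M_def by (rule member_le_sum) auto
  have "\<bar>pds_at vs f z - pds_at vs f 0 - (\<Sum>v\<in>UNIV. coord v z * pds_at (v # vs) f 0)\<bar> \<le> M * (l1_norm z)^2"
    if z: "dist z 0 < \<delta>" for z
  proof -
    have "\<bar>\<Sum>v\<in>UNIV. coord v z * (pds_at (v # vs) f (t *\<^sub>R z) - pds_at (v # vs) f 0)\<bar> \<le> M * l1_norm z * l1_norm z"
      if t: "t \<in> {0..1}" for t
    proof (rule abs_coord_sum_le)
      fix v
      have "norm (t *\<^sub>R z) \<le> norm z" "l1_norm (t *\<^sub>R z) \<le> l1_norm z"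
        using t l1_norm_nonneg[of z] by (simp_all add: mult_left_le_one_le l1_norm_scaleR)
      have "\<bar>pds_at (v # vs) f (t *\<^sub>R z) - pds_at (v # vs) f 0\<bar> \<le> Mv v * l1_norm (t *\<^sub>R z)"
        using z \<open>norm (t *\<^sub>R z) \<le> norm z\<close> by (intro \<delta>) simp
      also have "\<dots> \<le> \<bar>Mv v\<bar> * l1_norm (t *\<^sub>R z)"
        by (rule mult_right_mono[OF abs_ge_self l1_norm_nonneg])
      also have "\<dots> \<le> M * l1_norm z"
        by (rule mult_mono[OF M \<open>l1_norm (t *\<^sub>R z) \<le> l1_norm z\<close> order_trans[OF abs_ge_zero M] l1_norm_nonneg])
      finally show "\<bar>pds_at (v # vs) f (t *\<^sub>R z) - pds_at (v # vs) f 0\<bar> \<le> M * l1_norm z" .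
    qed
    from increment_along_ray[OF sm this] show ?thesis
      by (simp add: power2_eq_square mult.assoc)
  qed
  then show ?thesis
    unfolding eventually_nhds_metric using \<open>\<delta> > 0\<close> by blast
qed

section \<open>Zeros of functions with nonvanishing second derivative\<close>

lemma taylor_second_order:
  fixes g g1 g2 :: "real \<Rightarrow> real"
  assumes d1: "\<And>t. (g has_real_derivative g1 t) (at t)"
    and d2: "\<And>t. (g1 has_real_derivative g2 t) (at t)"
  shows "\<exists>\<xi>. min a x \<le> \<xi> \<and> \<xi> \<le> max a x \<and> g x = g a + g1 a * (x - a) + g2 \<xi> / 2 * (x - a)^2"
proof (cases "x = a")
  case True
  then show ?thesis by (intro exI[of _ a]) simp
next
  case False
  define diff where "diff m = (if m = 0 then g else if m = 1 then g1 else g2)" for m :: nat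
  have "\<forall>m t. m < 2 \<and> min a x \<le> t \<and> t \<le> max a x \<longrightarrow> DERIV (diff m) t :> diff (Suc m) t"
    using d1 d2 by (auto simp: diff_def less_2_cases_iff)
  then obtain t where t: "(if x < a then x < t \<and> t < a else a < t \<and> t < x)"
    "g x = (\<Sum>m<2. (diff m a / fact m) * (x - a)^m) + (diff 2 t / fact 2) * (x - a)^2"
    using Taylor[of 2 diff g "min a x" "max a x" a x] False by (auto simp: diff_def)
  then show ?thesis
    by (intro exI[of _ t]) (auto simp: diff_def numeral_2_eq_2 split: if_splits)
qed

lemma abs_diff_le_if_between:
  fixes a x \<xi> :: real
  assumes "min a x \<le> \<xi>" "\<xi> \<le> max a x"
  shows "\<bar>\<xi> - a\<bar> \<le> \<bar>x - a\<bar>"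
  using assms by (auto simp: min_def max_def abs_if split: if_splits)

lemma rolle_zero:
  fixes g :: "real \<Rightarrow> real"
  assumes "a < b" "g a = g b" "\<And>t. (g has_real_derivative g1 t) (at t)"
  shows "\<exists>z. a < z \<and> z < b \<and> g1 z = 0"
proof -
  obtain z where "a < z" "z < b" "g b - g a = (b - a) * g1 z"
    using MVT2[OF assms(1), of g g1] assms(3) by blast
  then show ?thesis using assms(1,2) by auto
qed

lemma three_zeros:
  fixes g :: "real \<Rightarrow> real"
  assumes d1: "\<And>t. (g has_real_derivative g1 t) (at t)"
    and d2: "\<And>t. (g1 has_real_derivative g2 t) (at t)"
    and "x < y" "y < z" "g x = 0" "g y = 0" "g z = 0"
  shows "\<exists>t. x < t \<and> t < z \<and> g2 t = 0"
proof -
  obtain p where p: "x < p" "p < y" "g1 p = 0" using rolle_zero[of x y g g1] assms by auto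
  obtain q where q: "y < q" "q < z" "g1 q = 0" using rolle_zero[of y z g g1] assms by auto
  obtain t where "p < t" "t < q" "g2 t = 0" using rolle_zero[of p q g1 g2] p q d2 by auto
  then show ?thesis using p q by (intro exI[of _ t]) auto
qed

lemma ivt_product_nonpos:
  fixes g :: "real \<Rightarrow> real"
  assumes "continuous_on {a..b} g" "a \<le> b" "g a * g b \<le> 0"
  shows "\<exists>x. a \<le> x \<and> x \<le> b \<and> g x = 0"
proof (cases "g a \<le> 0")
  case True
  then have "0 \<le> g b \<or> g a = 0"
    using assms(3) by (auto simp: mult_le_0_iff)
  then show ?thesis
    using IVT'[of g a 0 b] True assms(1,2) by auto
next
  case False
  then have "g b \<le> 0"
    using assms(3) by (auto simp: mult_le_0_iff)
  then show ?thesis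
    using IVT2'[of g b 0 a] False assms(1,2) by auto
qed

lemma abs_offset_le:
  fixes s t Q :: real
  assumes "0 \<le> t" "t \<le> 2"
  shows "\<bar>s * t / Q\<bar> \<le> 2 * \<bar>s\<bar> / \<bar>Q\<bar>"
proof -
  have "\<bar>s * t / Q\<bar> = \<bar>s\<bar> * t / \<bar>Q\<bar>"
    using assms by (simp add: abs_mult abs_divide)
  also have "\<dots> \<le> \<bar>s\<bar> * 2 / \<bar>Q\<bar>"
    using assms by (intro divide_right_mono mult_left_mono) auto
  finally show ?thesis
    by (simp add: mult.commute)
qed

lemma value_on_slope_line:
  fixes g g1 g2 :: "real \<Rightarrow> real"
  assumes d1: "\<And>t. (g has_real_derivative g1 t) (at t)"
    and d2: "\<And>t. (g1 has_real_derivative g2 t) (at t)"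
    and "g x0 = 0" and "Q \<noteq> 0"
    and window: "\<And>\<xi>. \<bar>\<xi> - x0\<bar> \<le> 2 * \<bar>g1 x0\<bar> / \<bar>Q\<bar> \<Longrightarrow> \<bar>g2 \<xi> - 2 * Q\<bar> \<le> \<bar>Q\<bar> / 2"
    and t: "0 \<le> t" "t \<le> 2"
  shows "\<exists>\<rho>. \<bar>\<rho> - 1\<bar> \<le> 1/4 \<and> g (x0 - g1 x0 * t / Q) = (g1 x0)^2 / Q * (t * (t * \<rho> - 1))"
proof -
  define s where "s = g1 x0"
  obtain \<xi> where \<xi>: "min x0 (x0 - s * t / Q) \<le> \<xi>" "\<xi> \<le> max x0 (x0 - s * t / Q)"
    "g (x0 - s * t / Q) = g x0 + s * ((x0 - s * t / Q) - x0) + g2 \<xi> / 2 * ((x0 - s * t / Q) - x0)^2"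
    using taylor_second_order[OF d1 d2, of x0 "x0 - s * t / Q"] by (auto simp: s_def)
  have "\<bar>\<xi> - x0\<bar> \<le> \<bar>s * t / Q\<bar>"
    using abs_diff_le_if_between[OF \<xi>(1,2)] by simp
  with abs_offset_le[OF t, of s Q] have "\<bar>g2 \<xi> - 2 * Q\<bar> \<le> \<bar>Q\<bar> / 2"
    by (intro window) (simp add: s_def)
  moreover have "g2 \<xi> / (2 * Q) - 1 = (g2 \<xi> - 2 * Q) / (2 * Q)"
    using \<open>Q \<noteq> 0\<close> by (simp add: field_simps)
  then have "\<bar>g2 \<xi> / (2 * Q) - 1\<bar> = \<bar>g2 \<xi> - 2 * Q\<bar> / (2 * \<bar>Q\<bar>)"
    by (simp add: abs_divide abs_mult)
  ultimately have "\<bar>g2 \<xi> / (2 * Q) - 1\<bar> \<le> (\<bar>Q\<bar> / 2) / (2 * \<bar>Q\<bar>)"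
    by (simp add: divide_right_mono)
  also have "\<dots> = 1/4"
    using \<open>Q \<noteq> 0\<close> by simp
  finally have "\<bar>g2 \<xi> / (2 * Q) - 1\<bar> \<le> 1/4" .
  moreover have "g (x0 - s * t / Q) = s^2 / Q * (t * (t * (g2 \<xi> / (2 * Q)) - 1))"
    using \<xi>(3) \<open>g x0 = 0\<close> \<open>Q \<noteq> 0\<close> by (simp add: field_simps power2_eq_square)
  ultimately show ?thesis
    unfolding s_def by blast
qed

text \<open>A zero x0 with slope s and second derivative close to 2 Q has a second zero near
  x0 - s / Q: the function changes sign between x0 - s / (2 Q) and x0 - 2 s / Q.\<close>

lemma second_zero_near:
  fixes g g1 g2 :: "real \<Rightarrow> real"
  assumes d1: "\<And>t. (g has_real_derivative g1 t) (at t)"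
    and d2: "\<And>t. (g1 has_real_derivative g2 t) (at t)"
    and "g x0 = 0" and s: "g1 x0 \<noteq> 0" and "Q \<noteq> 0"
    and window: "\<And>\<xi>. \<bar>\<xi> - x0\<bar> \<le> 2 * \<bar>g1 x0\<bar> / \<bar>Q\<bar> \<Longrightarrow> \<bar>g2 \<xi> - 2 * Q\<bar> \<le> \<bar>Q\<bar> / 2"
  shows "\<exists>x1. g x1 = 0 \<and> x1 \<noteq> x0 \<and> \<bar>x1 - x0\<bar> \<le> 2 * \<bar>g1 x0\<bar> / \<bar>Q\<bar>"
proof -
  define h where "h t = g (x0 - g1 x0 * t / Q)" for t
  note on_line = value_on_slope_line[OF d1 d2 \<open>g x0 = 0\<close> \<open>Q \<noteq> 0\<close> window, folded h_def]
  have "\<exists>\<rho>. \<bar>\<rho> - 1\<bar> \<le> 1/4 \<and> h (1/2) = (g1 x0)^2 / Q * (1/2 * (1/2 * \<rho> - 1))"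
    by (rule on_line) simp_all
  then obtain \<rho>1 where \<rho>1: "\<bar>\<rho>1 - 1\<bar> \<le> 1/4" "h (1/2) = (g1 x0)^2 / Q * (1/2 * (1/2 * \<rho>1 - 1))"
    by blast
  have "\<exists>\<rho>. \<bar>\<rho> - 1\<bar> \<le> 1/4 \<and> h 2 = (g1 x0)^2 / Q * (2 * (2 * \<rho> - 1))"
    by (rule on_line) simp_all
  then obtain \<rho>2 where \<rho>2: "\<bar>\<rho>2 - 1\<bar> \<le> 1/4" "h 2 = (g1 x0)^2 / Q * (2 * (2 * \<rho>2 - 1))"
    by blast
  have "1/2 * (1/2 * \<rho>1 - 1) \<le> 0"
    using abs_le_D1[OF \<rho>1(1)] by (simp add: field_simps)
  moreover have "0 \<le> 2 * (2 * \<rho>2 - 1)"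
    using abs_le_D2[OF \<rho>2(1)] by (simp add: field_simps)
  ultimately have "((g1 x0)^2 / Q)^2 * ((1/2 * (1/2 * \<rho>1 - 1)) * (2 * (2 * \<rho>2 - 1))) \<le> 0"
    by (intro mult_nonneg_nonpos[OF zero_le_power2 mult_nonpos_nonneg])
  then have sign_change: "h (1/2) * h 2 \<le> 0"
    unfolding \<rho>1(2) \<rho>2(2) power2_eq_square[of "(g1 x0)^2 / Q"] by (simp only: mult_ac)
  have "(h has_real_derivative g1 (x0 - g1 x0 * t / Q) * (- g1 x0 / Q)) (at t)" for t
    unfolding h_def by (rule DERIV_chain2[OF d1]) (use \<open>Q \<noteq> 0\<close> in \<open>auto intro!: derivative_eq_intros\<close>)
  then have "continuous_on {1/2..2} h"
    by (meson DERIV_isCont continuous_at_imp_continuous_on)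
  from ivt_product_nonpos[OF this _ sign_change]
  obtain t where t: "1/2 \<le> t" "t \<le> 2" "h t = 0"
    by force
  show ?thesis
  proof (intro exI[of _ "x0 - g1 x0 * t / Q"] conjI)
    show "g (x0 - g1 x0 * t / Q) = 0"
      using t(3) by (simp add: h_def)
    show "x0 - g1 x0 * t / Q \<noteq> x0"
      using s t(1) \<open>Q \<noteq> 0\<close> by simp
    show "\<bar>x0 - g1 x0 * t / Q - x0\<bar> \<le> 2 * \<bar>g1 x0\<bar> / \<bar>Q\<bar>"
      using abs_offset_le[of t "g1 x0" Q] t(1,2) by simp
  qed
qed

lemma second_zero_offset:
  fixes g g1 g2 :: "real \<Rightarrow> real"
  assumes d1: "\<And>t. (g has_real_derivative g1 t) (at t)"
    and d2: "\<And>t. (g1 has_real_derivative g2 t) (at t)"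
    and "g x0 = 0" "g x1 = 0" "x1 \<noteq> x0"
  shows "\<exists>\<xi>. min x0 x1 \<le> \<xi> \<and> \<xi> \<le> max x0 x1 \<and> g1 x0 + g2 \<xi> / 2 * (x1 - x0) = 0"
proof -
  obtain \<xi> where \<xi>: "min x0 x1 \<le> \<xi>" "\<xi> \<le> max x0 x1"
    "g x1 = g x0 + g1 x0 * (x1 - x0) + g2 \<xi> / 2 * (x1 - x0)^2"
    using taylor_second_order[OF d1 d2] by blast
  moreover have "(x1 - x0) * (g1 x0 + g2 \<xi> / 2 * (x1 - x0)) = g1 x0 * (x1 - x0) + g2 \<xi> / 2 * (x1 - x0)^2"
    by (simp add: power2_eq_square field_simps)
  ultimately have "(x1 - x0) * (g1 x0 + g2 \<xi> / 2 * (x1 - x0)) = 0"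
    using assms(3,4) by simp
  with \<xi>(1,2) \<open>x1 \<noteq> x0\<close> show ?thesis
    by auto
qed

text \<open>If g'' does not vanish on the interval, g has at most two zeros there, counted with
  multiplicity.\<close>

lemma zeros_within_pair:
  fixes g g1 g2 :: "real \<Rightarrow> real"
  assumes d1: "\<And>t. (g has_real_derivative g1 t) (at t)"
    and d2: "\<And>t. (g1 has_real_derivative g2 t) (at t)"
    and nz: "\<And>t. \<bar>t\<bar> < \<delta> \<Longrightarrow> g2 t \<noteq> 0"
    and x0: "\<bar>x0\<bar> < \<delta>" "g x0 = 0" and x1: "\<bar>x1\<bar> < \<delta>" "g x1 = 0"
    and simple: "x1 \<noteq> x0 \<or> g1 x0 = 0"
    and x: "\<bar>x\<bar> < \<delta>" "g x = 0"
  shows "x = x0 \<or> x = x1"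
proof (rule ccontr)
  assume x_new: "\<not> (x = x0 \<or> x = x1)"
  show False
  proof (cases "x1 = x0")
    case True
    with simple have "g1 x0 = 0" by simp
    obtain \<xi> where "min x0 x \<le> \<xi>" "\<xi> \<le> max x0 x" "g1 x0 + g2 \<xi> / 2 * (x - x0) = 0"
      using second_zero_offset[OF d1 d2 x0(2) x(2)] x_new by blast
    with \<open>g1 x0 = 0\<close> x_new x0(1) x(1) nz[of \<xi>] show False
      by auto
  next
    case False
    have no_triple: False if abc: "a < b" "b < c" "g a = 0" "g b = 0" "g c = 0" "\<bar>a\<bar> < \<delta>" "\<bar>c\<bar> < \<delta>" for a b c
    proof -
      obtain t where "a < t" "t < c" "g2 t = 0"
        using three_zeros[OF d1 d2 abc(1-5)] by blast
      moreover have "\<bar>t\<bar> < \<delta>"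
        using abc(6,7) calculation(1,2) by (simp add: abs_less_iff)
      ultimately show False
        using nz by blast
    qed
    consider "x < x0" "x0 < x1" | "x < x1" "x1 < x0" | "x0 < x" "x < x1" | "x1 < x" "x < x0"
      | "x0 < x1" "x1 < x" | "x1 < x0" "x0 < x"
      using False x_new by linarith
    then show False
      by cases (use no_triple x0 x1 x in blast)+
  qed
qed

lemma second_zero_offset_bound:
  fixes s P Q u e :: real
  assumes eq: "s + P / 2 * u = 0" and P: "\<bar>P - 2 * Q\<bar> \<le> e" and e: "e \<le> \<bar>Q\<bar> / 2" and "Q \<noteq> 0"
  shows "\<bar>u + s / Q\<bar> \<le> \<bar>s\<bar> * e / Q^2"
proof -
  have "\<bar>2 * Q\<bar> \<le> \<bar>P\<bar> + \<bar>P - 2 * Q\<bar>"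
    by linarith
  with P e have "\<bar>Q\<bar> \<le> \<bar>P\<bar>"
    by simp
  with \<open>Q \<noteq> 0\<close> have "P \<noteq> 0"
    by auto
  have "u = - 2 * s / P"
    using eq \<open>P \<noteq> 0\<close> by (simp add: field_simps)
  then have "u + s / Q = - 2 * s / P + s / Q"
    by simp
  also have "\<dots> = s * (P - 2 * Q) / (Q * P)"
    using \<open>P \<noteq> 0\<close> \<open>Q \<noteq> 0\<close> by (simp add: field_simps)
  finally have "u + s / Q = s * (P - 2 * Q) / (Q * P)" .
  then have "\<bar>u + s / Q\<bar> = \<bar>s\<bar> * \<bar>P - 2 * Q\<bar> / (\<bar>Q\<bar> * \<bar>P\<bar>)"
    by (simp add: abs_mult abs_divide)
  also have "\<dots> \<le> \<bar>s\<bar> * e / (\<bar>Q\<bar> * \<bar>Q\<bar>)"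
    using P \<open>\<bar>Q\<bar> \<le> \<bar>P\<bar>\<close> \<open>Q \<noteq> 0\<close>
    by (intro frac_le mult_left_mono mult_nonneg_nonneg) (auto intro: order_trans[OF abs_ge_zero] simp: zero_less_mult_iff)
  finally show ?thesis
    by (simp add: power2_eq_square abs_mult_self_eq)
qed

section \<open>The p-th equation near the synchronous branch\<close>

definition diag_dir :: "'s set \<Rightarrow> (real^'s::finite) \<times> real" where
  "diag_dir L = ((\<chi> i. if i \<in> L then 1 else 0), 0)"

text \<open>The argument of f in the p-th equation: the inputs indexed by L, which come from p itself,
  carry the unknown b; all other inputs carry the common value y.\<close>

definition line_point :: "'s set \<Rightarrow> real \<Rightarrow> real \<Rightarrow> real \<Rightarrow> (real^'s::finite) \<times> real" where
  "line_point L y b l = ((\<chi> i. if i \<in> L then b else y), l)"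

definition diag_pd1 :: "'s set \<Rightarrow> (real^'s::finite \<Rightarrow> real \<Rightarrow> real) \<Rightarrow> (real^'s) \<times> real \<Rightarrow> real" where
  "diag_pd1 L f z = (\<Sum>i\<in>L. pds_at [Some i] f z)"

definition diag_pd2 :: "'s set \<Rightarrow> (real^'s::finite \<Rightarrow> real \<Rightarrow> real) \<Rightarrow> (real^'s) \<times> real \<Rightarrow> real" where
  "diag_pd2 L f z = (\<Sum>i\<in>L. \<Sum>j\<in>L. pds_at [Some j, Some i] f z)"

lemma sum_coord_diag_dir: "(\<Sum>v\<in>UNIV. coord v (diag_dir L) * g v) = (\<Sum>i\<in>L. g (Some i))"
proof -
  have "(\<Sum>v\<in>UNIV. coord v (diag_dir L) * g v) = (\<Sum>i\<in>UNIV. if i \<in> L then g (Some i) else 0)"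
    unfolding sum_UNIV_option by (simp add: coord_def diag_dir_def) (rule sum.cong, auto)
  also have "\<dots> = (\<Sum>i\<in>UNIV \<inter> L. g (Some i))"
    by (rule sum.inter_restrict[symmetric]) simp
  finally show ?thesis
    by simp
qed

lemma line_point_shift: "line_point L y b l = line_point L y 0 l + b *\<^sub>R diag_dir L"
  by (simp add: line_point_def diag_dir_def vec_eq_iff)

lemma has_real_derivative_pds_at_diag:
  assumes "smooth_fun f"
  shows "((\<lambda>b. pds_at vs f (line_point L y b l)) has_real_derivative
           (\<Sum>i\<in>L. pds_at (Some i # vs) f (line_point L y b l))) (at b)"
  using has_real_derivative_pds_at_line[OF assms, of vs "line_point L y 0 l" "diag_dir L" b]
  by (simp add: sum_coord_diag_dir line_point_shift[symmetric])

lemma has_real_derivative_line_point: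
  assumes "smooth_fun f"
  shows "((\<lambda>b. f (\<chi> i. if i \<in> L then b else y) l) has_real_derivative diag_pd1 L f (line_point L y b l)) (at b)"
  using has_real_derivative_pds_at_diag[OF assms, of "[]" L y l b]
  by (simp add: diag_pd1_def pds_at_Nil line_point_def)

lemma has_real_derivative_diag_pd1:
  assumes "smooth_fun f"
  shows "((\<lambda>b. diag_pd1 L f (line_point L y b l)) has_real_derivative diag_pd2 L f (line_point L y b l)) (at b)"
  unfolding diag_pd1_def diag_pd2_def
  by (intro DERIV_sum has_real_derivative_pds_at_diag[OF assms])

lemma diag_pd1_zero: "diag_pd1 L f 0 = (\<Sum>i\<in>L. coef_a f i)"
  by (simp add: diag_pd1_def pds_at_def coef_a_def)

lemma diag_pd2_zero: "diag_pd2 L f 0 = 2 * (\<Sum>i\<in>L. \<Sum>j\<in>L. coef_ff f i j)"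
proof -
  have "diag_pd2 L f 0 = (\<Sum>i\<in>L. \<Sum>j\<in>L. 2 * coef_ff f j i)"
    by (simp add: diag_pd2_def pds_at_def coef_ff_def)
  also have "\<dots> = 2 * (\<Sum>j\<in>L. \<Sum>i\<in>L. coef_ff f j i)"
    by (subst sum.swap) (simp add: sum_distrib_left)
  finally show ?thesis .
qed

lemma l1_norm_line_point:
  fixes L :: "'s::finite set"
  shows "l1_norm (line_point L y b l) \<le> real CARD('s) * (\<bar>b\<bar> + \<bar>y\<bar> + \<bar>l\<bar>)"
proof -
  have "l1_norm (line_point L y b l) = \<bar>l\<bar> + (\<Sum>i\<in>(UNIV::'s set). \<bar>if i \<in> L then b else y\<bar>)"
    by (simp add: l1_norm_def sum_UNIV_option coord_def line_point_def)
  also have "\<dots> \<le> \<bar>l\<bar> + (\<Sum>i\<in>(UNIV::'s set). \<bar>b\<bar> + \<bar>y\<bar>)"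
    by (intro add_left_mono sum_mono) auto
  also have "\<dots> \<le> real CARD('s) * \<bar>l\<bar> + real CARD('s) * (\<bar>b\<bar> + \<bar>y\<bar>)"
    by (simp add: mult_le_cancel_right1)
  finally show ?thesis
    by (simp add: distrib_left)
qed

lemma linear_part_line_point:
  assumes "smooth_fun f"
  shows "(\<Sum>i\<in>L. \<Sum>v\<in>UNIV. coord v (line_point L y y l) * pds_at [v, Some i] f 0)
       = l * (\<Sum>i\<in>L. coef_fl f i) + 2 * y * ((\<Sum>i\<in>L. \<Sum>j\<in>L. coef_ff f i j) + (\<Sum>i\<in>L. \<Sum>j\<in>-L. coef_ff f i j))"
proof -
  have swap: "pds [v, Some i] f 0 0 = pds [Some i, v] f 0 0" for v i
    using pds_at_swap[OF assms, of v "Some i" "[]" 0] by (simp add: pds_at_def)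
  have swap_None: "pds [None, Some i] f 0 0 = pds [Some i, None] f 0 0" for i
    by (rule swap)
  have swap_Some: "(\<lambda>j. y * pds [Some j, Some i] f 0 0) = (\<lambda>j. y * pds [Some i, Some j] f 0 0)" for i
    by (intro ext) (metis swap)
  have "(\<Sum>i\<in>L. \<Sum>v\<in>UNIV. coord v (line_point L y y l) * pds_at [v, Some i] f 0)
      = (\<Sum>i\<in>L. l * pds [None, Some i] f 0 0 + (\<Sum>j\<in>UNIV. y * pds [Some j, Some i] f 0 0))"
    unfolding sum_UNIV_option by (simp add: coord_def line_point_def pds_at_def)
  also have "\<dots> = (\<Sum>i\<in>L. l * coef_fl f i + y * (\<Sum>j\<in>UNIV. 2 * coef_ff f i j))"
    by (simp only: swap_None swap_Some) (simp add: coef_fl_def coef_ff_def sum_distrib_left)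
  also have "\<dots> = l * (\<Sum>i\<in>L. coef_fl f i) + 2 * y * (\<Sum>i\<in>L. \<Sum>j\<in>UNIV. coef_ff f i j)"
    by (simp add: sum.distrib sum_distrib_left[symmetric] mult.assoc)
  also have "(\<Sum>j\<in>UNIV. coef_ff f i j) = (\<Sum>j\<in>L. coef_ff f i j) + (\<Sum>j\<in>-L. coef_ff f i j)" for i
    using sum.union_disjoint[of L "-L" "coef_ff f i"] by simp
  then have "(\<Sum>i\<in>L. \<Sum>j\<in>UNIV. coef_ff f i j) = (\<Sum>i\<in>L. \<Sum>j\<in>L. coef_ff f i j) + (\<Sum>i\<in>L. \<Sum>j\<in>-L. coef_ff f i j)"
    by (simp add: sum.distrib)
  finally show ?thesis .
qed

lemma diag_pd1_taylor1_at_0: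
  assumes "smooth_fun f"
  shows "\<exists>M. \<forall>\<^sub>F z in nhds 0. \<bar>diag_pd1 L f z - diag_pd1 L f 0
      - (\<Sum>i\<in>L. \<Sum>v\<in>UNIV. coord v z * pds_at [v, Some i] f 0)\<bar> \<le> M * (l1_norm z)^2"
proof -
  have "\<exists>M. \<forall>\<^sub>F z in nhds 0. \<bar>\<Sum>i\<in>L. pds_at [Some i] f z - pds_at [Some i] f 0
      - (\<Sum>v\<in>UNIV. coord v z * pds_at [v, Some i] f 0)\<bar> \<le> M * (l1_norm z)^2"
    using pds_at_taylor1_at_0[OF assms] by (intro eventually_sum_le_bound) auto
  then show ?thesis
    by (simp add: diag_pd1_def sum_subtractf)
qed

lemma diag_pd2_lipschitz_at_0:
  assumes "smooth_fun f"
  shows "\<exists>M. \<forall>\<^sub>F z in nhds 0. \<bar>diag_pd2 L f z - diag_pd2 L f 0\<bar> \<le> M * l1_norm z"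
proof -
  have "\<exists>M. \<forall>\<^sub>F z in nhds 0. \<bar>\<Sum>i\<in>L. \<Sum>j\<in>L. pds_at [Some j, Some i] f z - pds_at [Some j, Some i] f 0\<bar>
      \<le> M * l1_norm z"
    using pds_at_lipschitz_at_0[OF assms]
    by (intro eventually_sum_le_bound) (auto intro!: eventually_sum_le_bound)
  then show ?thesis
    by (simp add: diag_pd2_def sum_subtractf)
qed

lemma lipschitz_at_0_on_line_points:
  fixes G :: "(real^'s::finite) \<times> real \<Rightarrow> real"
  assumes "\<forall>\<^sub>F z in nhds 0. \<bar>G z - G 0\<bar> \<le> M * l1_norm z"
  shows "\<exists>\<delta>>0. \<exists>M'\<ge>0. \<forall>b y l. \<bar>b\<bar> < \<delta> \<longrightarrow> \<bar>y\<bar> < \<delta> \<longrightarrow> \<bar>l\<bar> < \<delta> \<longrightarrow>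
           \<bar>G (line_point L y b l) - G 0\<bar> \<le> M' * (\<bar>b\<bar> + \<bar>y\<bar> + \<bar>l\<bar>)"
proof -
  define n where "n = real CARD('s)"
  have "n \<ge> 1" by (simp add: n_def)
  obtain \<rho> where "\<rho> > 0" and \<rho>: "\<And>z. dist z 0 < \<rho> \<Longrightarrow> \<bar>G z - G 0\<bar> \<le> M * l1_norm z"
    using assms unfolding eventually_nhds_metric by blast
  have "\<bar>G (line_point L y b l) - G 0\<bar> \<le> (\<bar>M\<bar> * n) * (\<bar>b\<bar> + \<bar>y\<bar> + \<bar>l\<bar>)"
    if "\<bar>b\<bar> < \<rho> / (3 * n)" "\<bar>y\<bar> < \<rho> / (3 * n)" "\<bar>l\<bar> < \<rho> / (3 * n)" for b y l
  proof -
    have l1: "l1_norm (line_point L y b l) \<le> n * (\<bar>b\<bar> + \<bar>y\<bar> + \<bar>l\<bar>)"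
      unfolding n_def by (rule l1_norm_line_point)
    also have "\<dots> < n * (3 * (\<rho> / (3 * n)))"
      using that \<open>n \<ge> 1\<close> by (intro mult_strict_left_mono) auto
    also have "\<dots> = \<rho>"
      using \<open>n \<ge> 1\<close> by simp
    finally have "dist (line_point L y b l) 0 < \<rho>"
      using norm_le_l1_norm[of "line_point L y b l"] by simp
    then have "\<bar>G (line_point L y b l) - G 0\<bar> \<le> M * l1_norm (line_point L y b l)"
      by (rule \<rho>)
    also have "\<dots> \<le> \<bar>M\<bar> * (n * (\<bar>b\<bar> + \<bar>y\<bar> + \<bar>l\<bar>))"
      using l1 l1_norm_nonneg[of "line_point L y b l"]
      by (meson abs_ge_self abs_ge_zero mult_mono order_trans)
    finally show ?thesis
      by (simp add: mult_ac)
  qed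
  moreover have "\<rho> / (3 * n) > 0" "\<bar>M\<bar> * n \<ge> 0"
    using \<open>\<rho> > 0\<close> \<open>n \<ge> 1\<close> by simp_all
  ultimately show ?thesis
    by blast
qed

lemma bigo_quadratic_if_cubic_remainder:
  fixes X :: "real \<Rightarrow> real"
  assumes "(\<lambda>l. X l - D * l - R * l^2) \<in> O[nhds 0](\<lambda>l. l^3)"
  shows "(\<lambda>l. X l - D * l) \<in> O[nhds 0](\<lambda>l. l^2)"
proof -
  obtain C where "\<forall>\<^sub>F l in nhds 0. \<bar>X l - D * l - R * l^2\<bar> \<le> C * \<bar>l^3\<bar>"
    using assms by (elim landau_o.bigE) auto
  moreover have "\<forall>\<^sub>F l in nhds 0. 1 * \<bar>l\<bar> < (1::real)"
    by (rule eventually_mult_abs_less) simp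
  ultimately have "\<forall>\<^sub>F l in nhds 0. norm (X l - D * l) \<le> (\<bar>C\<bar> + \<bar>R\<bar>) * norm (l^2)"
  proof eventually_elim
    case (elim l)
    have "\<bar>l^3\<bar> = \<bar>l\<bar> * l^2"
      by (simp add: abs_mult power3_eq_cube power2_eq_square)
    also have "\<dots> \<le> 1 * l^2"
      using elim(2) by (intro mult_right_mono) auto
    finally have "\<bar>l^3\<bar> \<le> l^2"
      by simp
    then have "C * \<bar>l^3\<bar> \<le> \<bar>C\<bar> * l^2"
      by (meson abs_ge_self abs_ge_zero mult_mono order_trans)
    moreover have "\<bar>X l - D * l\<bar> \<le> \<bar>X l - D * l - R * l^2\<bar> + \<bar>R * l^2\<bar>"
      by linarith
    moreover have "\<bar>R * l^2\<bar> = \<bar>R\<bar> * l^2"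
      by (simp add: abs_mult)
    ultimately show ?case
      using elim(1) by (simp add: distrib_right)
  qed
  then show ?thesis
    by (rule bigoI)
qed

section \<open>The two branches\<close>

locale transcritical_cell =
  fixes f :: "real^'s::finite \<Rightarrow> real \<Rightarrow> real" and L :: "'s set" and X :: "real \<Rightarrow> real"
  assumes smooth: "smooth_fun f"
    and critical: "(\<Sum>i\<in>L. coef_a f i) = 0"
    and quad_nonzero: "(\<Sum>i\<in>L. \<Sum>j\<in>L. coef_ff f i j) \<noteq> 0"
    and c_nonzero: "2 * coef_D f * ((\<Sum>i\<in>L. \<Sum>j\<in>L. coef_ff f i j) + (\<Sum>i\<in>L. \<Sum>j\<in>-L. coef_ff f i j))
                          + (\<Sum>i\<in>L. coef_fl f i) \<noteq> 0"
    and sync_zero: "\<forall>\<^sub>F l in nhds 0. f (\<chi> i. X l) l = 0"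
    and sync_expansion: "(\<lambda>l. X l - coef_D f * l) \<in> O[nhds 0](\<lambda>l. l^2)"
begin

abbreviation Q :: real where
  "Q \<equiv> \<Sum>i\<in>L. \<Sum>j\<in>L. coef_ff f i j"

abbreviation S :: real where
  "S \<equiv> \<Sum>i\<in>L. \<Sum>j\<in>-L. coef_ff f i j"

text \<open>The second branch leaves the synchronous one with slope D - c / Q.\<close>

abbreviation c :: real where
  "c \<equiv> 2 * coef_D f * (Q + S) + (\<Sum>i\<in>L. coef_fl f i)"

definition branch_eq :: "real \<Rightarrow> real \<Rightarrow> real" where
  "branch_eq l = (\<lambda>b. f (\<chi> i. if i \<in> L then b else X l) l)"

definition slope :: "real \<Rightarrow> real" where
  "slope l = diag_pd1 L f (line_point L (X l) (X l) l)"

lemma has_real_derivative_branch_eq: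
  "(branch_eq l has_real_derivative diag_pd1 L f (line_point L (X l) b l)) (at b)"
  unfolding branch_eq_def by (rule has_real_derivative_line_point[OF smooth])

lemma has_real_derivative_slope_line:
  "((\<lambda>b. diag_pd1 L f (line_point L (X l) b l)) has_real_derivative diag_pd2 L f (line_point L (X l) b l)) (at b)"
  by (rule has_real_derivative_diag_pd1[OF smooth])

lemma sync_quadratic_bound: "\<exists>C. \<forall>\<^sub>F l in nhds 0. \<bar>X l - coef_D f * l\<bar> \<le> C * l^2"
proof -
  obtain C where "\<forall>\<^sub>F l in nhds 0. norm (X l - coef_D f * l) \<le> C * norm (l^2)"
    using sync_expansion by (elim landau_o.bigE) auto
  then show ?thesis
    by auto
qed

lemma sync_linear_bound: "\<exists>A\<ge>0. \<forall>\<^sub>F l in nhds 0. \<bar>X l\<bar> \<le> A * \<bar>l\<bar>"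
proof -
  obtain C where "\<forall>\<^sub>F l in nhds 0. \<bar>X l - coef_D f * l\<bar> \<le> C * l^2"
    using sync_quadratic_bound by blast
  moreover have "\<forall>\<^sub>F l in nhds 0. 1 * \<bar>l\<bar> < (1::real)"
    by (rule eventually_mult_abs_less) simp
  ultimately have "\<forall>\<^sub>F l in nhds 0. \<bar>X l\<bar> \<le> (\<bar>C\<bar> + \<bar>coef_D f\<bar>) * \<bar>l\<bar>"
  proof eventually_elim
    case (elim l)
    have "C * l^2 \<le> \<bar>C\<bar> * (\<bar>l\<bar> * \<bar>l\<bar>)"
      by (simp add: power2_eq_square mult_right_mono)
    also have "\<dots> \<le> \<bar>C\<bar> * \<bar>l\<bar>"
      using elim(2) by (intro mult_left_mono mult_left_le_one_le) auto
    finally have "\<bar>X l - coef_D f * l\<bar> \<le> \<bar>C\<bar> * \<bar>l\<bar>"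
      using elim(1) by linarith
    moreover have "\<bar>X l\<bar> \<le> \<bar>X l - coef_D f * l\<bar> + \<bar>coef_D f * l\<bar>"
      by linarith
    ultimately show ?case
      by (simp add: abs_mult distrib_right)
  qed
  then show ?thesis
    by (intro exI[of _ "\<bar>C\<bar> + \<bar>coef_D f\<bar>"]) simp
qed

lemma sync_at_0: "X 0 = 0"
proof -
  obtain A where "\<forall>\<^sub>F l in nhds 0. \<bar>X l\<bar> \<le> A * \<bar>l\<bar>"
    using sync_linear_bound by blast
  from eventually_nhds_x_imp_x[OF this] show ?thesis
    by simp
qed

lemma slope_at_0: "slope 0 = 0"
proof -
  have "line_point L (X 0) (X 0) 0 = 0"
    by (simp add: sync_at_0 line_point_def zero_prod_def vec_eq_iff)
  then show ?thesis
    using critical by (simp add: slope_def diag_pd1_zero)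
qed

text \<open>The linear part of the first derivative at the origin, evaluated on the synchronous branch,
  is c l.\<close>

lemma slope_expansion: "\<exists>C. \<forall>\<^sub>F l in nhds 0. \<bar>slope l - c * l\<bar> \<le> C * l^2"
proof -
  define n where "n = real CARD('s)"
  obtain M where "\<forall>\<^sub>F z in nhds 0. \<bar>diag_pd1 L f z - diag_pd1 L f 0
      - (\<Sum>i\<in>L. \<Sum>v\<in>UNIV. coord v z * pds_at [v, Some i] f 0)\<bar> \<le> M * (l1_norm z)^2"
    using diag_pd1_taylor1_at_0[OF smooth] by blast
  then obtain \<rho> where "\<rho> > 0" and \<rho>: "\<And>z. dist z 0 < \<rho> \<Longrightarrow> \<bar>diag_pd1 L f z - diag_pd1 L f 0
      - (\<Sum>i\<in>L. \<Sum>v\<in>UNIV. coord v z * pds_at [v, Some i] f 0)\<bar> \<le> M * (l1_norm z)^2"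
    unfolding eventually_nhds_metric by blast
  obtain A where "A \<ge> 0" and XA: "\<forall>\<^sub>F l in nhds 0. \<bar>X l\<bar> \<le> A * \<bar>l\<bar>"
    using sync_linear_bound by blast
  obtain CX where XD: "\<forall>\<^sub>F l in nhds 0. \<bar>X l - coef_D f * l\<bar> \<le> CX * l^2"
    using sync_quadratic_bound by blast
  have "\<forall>\<^sub>F l in nhds 0. (n * (2 * A + 1)) * \<bar>l\<bar> < \<rho>"
    using \<open>\<rho> > 0\<close> by (rule eventually_mult_abs_less)
  with XA XD have "\<forall>\<^sub>F l in nhds 0. \<bar>slope l - c * l\<bar> \<le> (\<bar>M\<bar> * (n * (2 * A + 1))^2 + 2 * \<bar>Q + S\<bar> * \<bar>CX\<bar>) * l^2"
  proof eventually_elim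
    case (elim l)
    define z where "z = line_point L (X l) (X l) l"
    have "l1_norm z \<le> n * (\<bar>X l\<bar> + \<bar>X l\<bar> + \<bar>l\<bar>)"
      unfolding z_def n_def by (rule l1_norm_line_point)
    also have "\<dots> \<le> n * (2 * A + 1) * \<bar>l\<bar>"
      using elim(1) by (simp add: n_def algebra_simps mult_left_mono)
    finally have l1z: "l1_norm z \<le> n * (2 * A + 1) * \<bar>l\<bar>" .
    then have z_close: "dist z 0 < \<rho>"
      using norm_le_l1_norm[of z] elim(3) by simp
    define lin where "lin = l * (\<Sum>i\<in>L. coef_fl f i) + 2 * X l * (Q + S)"
    from \<rho>[OF z_close] have "\<bar>slope l - lin\<bar> \<le> M * (l1_norm z)^2"
      using critical by (simp add: slope_def z_def lin_def linear_part_line_point[OF smooth] diag_pd1_zero)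
    also have "\<dots> \<le> \<bar>M\<bar> * (n * (2 * A + 1) * \<bar>l\<bar>)^2"
      using l1z l1_norm_nonneg[of z] by (intro mult_mono power_mono) auto
    finally have near_lin: "\<bar>slope l - lin\<bar> \<le> \<bar>M\<bar> * (n * (2 * A + 1))^2 * l^2"
      by (simp add: power_mult_distrib)
    have "lin - c * l = 2 * (Q + S) * (X l - coef_D f * l)"
      by (simp add: lin_def algebra_simps)
    then have "\<bar>lin - c * l\<bar> = 2 * \<bar>Q + S\<bar> * \<bar>X l - coef_D f * l\<bar>"
      by (simp only: abs_mult abs_numeral)
    also have "\<dots> \<le> 2 * \<bar>Q + S\<bar> * (\<bar>CX\<bar> * l^2)"
      using elim(2) order_trans[OF elim(2) mult_right_mono[OF abs_ge_self zero_le_power2]]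
      by (intro mult_left_mono) auto
    finally have lin_near: "\<bar>lin - c * l\<bar> \<le> 2 * \<bar>Q + S\<bar> * \<bar>CX\<bar> * l^2"
      by (simp only: mult.assoc)
    have "\<bar>slope l - c * l\<bar> \<le> \<bar>slope l - lin\<bar> + \<bar>lin - c * l\<bar>"
      by linarith
    with near_lin lin_near show ?case
      by (simp only: distrib_right)
  qed
  then show ?thesis
    by blast
qed

lemma curvature_box:
  "\<exists>\<delta>>0. \<exists>M\<ge>0. \<forall>b y l. \<bar>b\<bar> < \<delta> \<longrightarrow> \<bar>y\<bar> < \<delta> \<longrightarrow> \<bar>l\<bar> < \<delta> \<longrightarrow>
      \<bar>diag_pd2 L f (line_point L y b l) - 2 * Q\<bar> \<le> M * (\<bar>b\<bar> + \<bar>y\<bar> + \<bar>l\<bar>) \<and>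
      M * (\<bar>b\<bar> + \<bar>y\<bar> + \<bar>l\<bar>) \<le> \<bar>Q\<bar> / 2"
proof -
  obtain M0 where "\<forall>\<^sub>F z in nhds 0. \<bar>diag_pd2 L f z - diag_pd2 L f 0\<bar> \<le> M0 * l1_norm z"
    using diag_pd2_lipschitz_at_0[OF smooth] by blast
  from lipschitz_at_0_on_line_points[OF this]
  obtain \<delta> M where "\<delta> > 0" "M \<ge> 0" and M: "\<And>b y l. \<bar>b\<bar> < \<delta> \<Longrightarrow> \<bar>y\<bar> < \<delta> \<Longrightarrow> \<bar>l\<bar> < \<delta> \<Longrightarrow>
      \<bar>diag_pd2 L f (line_point L y b l) - 2 * Q\<bar> \<le> M * (\<bar>b\<bar> + \<bar>y\<bar> + \<bar>l\<bar>)"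
    unfolding diag_pd2_zero by blast
  define \<delta>' where "\<delta>' = min \<delta> (\<bar>Q\<bar> / 6 / (M + 1))"
  have "M * (\<bar>b\<bar> + \<bar>y\<bar> + \<bar>l\<bar>) \<le> \<bar>Q\<bar> / 2" if "\<bar>b\<bar> < \<delta>'" "\<bar>y\<bar> < \<delta>'" "\<bar>l\<bar> < \<delta>'" for b y l
  proof -
    have "M * (\<bar>b\<bar> + \<bar>y\<bar> + \<bar>l\<bar>) \<le> (M + 1) * (3 * (\<bar>Q\<bar> / 6 / (M + 1)))"
      using that \<open>M \<ge> 0\<close> unfolding \<delta>'_def by (intro mult_mono) auto
    also have "\<dots> = \<bar>Q\<bar> / 2"
      using \<open>M \<ge> 0\<close> by (simp add: field_simps)
    finally show ?thesis .
  qed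
  moreover have "\<delta>' > 0"
    using \<open>\<delta> > 0\<close> \<open>M \<ge> 0\<close> quad_nonzero by (simp add: \<delta>'_def)
  moreover have "\<bar>b\<bar> < \<delta>' \<Longrightarrow> \<bar>y\<bar> < \<delta>' \<Longrightarrow> \<bar>l\<bar> < \<delta>' \<Longrightarrow>
      \<bar>diag_pd2 L f (line_point L y b l) - 2 * Q\<bar> \<le> M * (\<bar>b\<bar> + \<bar>y\<bar> + \<bar>l\<bar>)" for b y l
    by (rule M) (simp_all add: \<delta>'_def)
  ultimately show ?thesis
    using \<open>M \<ge> 0\<close> by blast
qed

context
  fixes \<delta> M A l :: real
  assumes box: "\<And>b y l. \<bar>b\<bar> < \<delta> \<Longrightarrow> \<bar>y\<bar> < \<delta> \<Longrightarrow> \<bar>l\<bar> < \<delta> \<Longrightarrow>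
      \<bar>diag_pd2 L f (line_point L y b l) - 2 * Q\<bar> \<le> M * (\<bar>b\<bar> + \<bar>y\<bar> + \<bar>l\<bar>) \<and>
      M * (\<bar>b\<bar> + \<bar>y\<bar> + \<bar>l\<bar>) \<le> \<bar>Q\<bar> / 2"
    and "M \<ge> 0" and "A \<ge> 0"
    and sync_le: "\<bar>X l\<bar> \<le> A * \<bar>l\<bar>" and slope_close: "\<bar>slope l - c * l\<bar> \<le> \<bar>c\<bar> * \<bar>l\<bar> / 2"
    and reach_small: "(2 * A + 3 * \<bar>c\<bar> / \<bar>Q\<bar> + 1) * \<bar>l\<bar> < \<delta>" and "l \<noteq> 0"
    and sync_root: "branch_eq l (X l) = 0"
begin

lemma slope_le: "\<bar>slope l\<bar> \<le> 3/2 * (\<bar>c\<bar> * \<bar>l\<bar>)"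
  and slope_ne: "slope l \<noteq> 0"
proof -
  have "\<bar>c * l\<bar> = \<bar>c\<bar> * \<bar>l\<bar>"
    by (simp add: abs_mult)
  then show "\<bar>slope l\<bar> \<le> 3/2 * (\<bar>c\<bar> * \<bar>l\<bar>)"
    using slope_close by linarith
  have "\<bar>c\<bar> * \<bar>l\<bar> / 2 \<le> \<bar>slope l\<bar>"
    using slope_close \<open>\<bar>c * l\<bar> = _\<close> by linarith
  moreover have "\<bar>c\<bar> * \<bar>l\<bar> > 0"
    using c_nonzero \<open>l \<noteq> 0\<close> by simp
  ultimately show "slope l \<noteq> 0"
    by auto
qed

lemma near_sync_in_box:
  assumes "\<bar>\<xi> - X l\<bar> \<le> 2 * \<bar>slope l\<bar> / \<bar>Q\<bar>"
  shows "\<bar>\<xi>\<bar> + \<bar>X l\<bar> + \<bar>l\<bar> \<le> (2 * A + 3 * \<bar>c\<bar> / \<bar>Q\<bar> + 1) * \<bar>l\<bar>"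
    and "\<bar>\<xi>\<bar> < \<delta>" "\<bar>X l\<bar> < \<delta>" "\<bar>l\<bar> < \<delta>"
proof -
  have "2 * \<bar>slope l\<bar> / \<bar>Q\<bar> \<le> 3 * \<bar>c\<bar> / \<bar>Q\<bar> * \<bar>l\<bar>"
    using slope_le by (simp add: divide_right_mono)
  moreover have "\<bar>\<xi>\<bar> \<le> \<bar>X l\<bar> + \<bar>\<xi> - X l\<bar>"
    by linarith
  ultimately show sum_le: "\<bar>\<xi>\<bar> + \<bar>X l\<bar> + \<bar>l\<bar> \<le> (2 * A + 3 * \<bar>c\<bar> / \<bar>Q\<bar> + 1) * \<bar>l\<bar>"
    using assms sync_le by (simp add: algebra_simps)
  show "\<bar>\<xi>\<bar> < \<delta>" "\<bar>X l\<bar> < \<delta>" "\<bar>l\<bar> < \<delta>"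
    using sum_le reach_small abs_ge_zero[of \<xi>] abs_ge_zero[of "X l"] abs_ge_zero[of l] by linarith+
qed

lemma second_zero_estimate:
  "\<exists>x. branch_eq l x = 0 \<and> x \<noteq> X l \<and> \<bar>x\<bar> < \<delta> \<and>
     \<bar>x - X l + slope l / Q\<bar> \<le> 3/2 * \<bar>c\<bar> * M * (2 * A + 3 * \<bar>c\<bar> / \<bar>Q\<bar> + 1) / Q^2 * l^2"
proof -
  have box_at: "\<bar>diag_pd2 L f (line_point L (X l) \<xi> l) - 2 * Q\<bar> \<le> M * (\<bar>\<xi>\<bar> + \<bar>X l\<bar> + \<bar>l\<bar>) \<and>
      M * (\<bar>\<xi>\<bar> + \<bar>X l\<bar> + \<bar>l\<bar>) \<le> \<bar>Q\<bar> / 2"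
    if "\<bar>\<xi> - X l\<bar> \<le> 2 * \<bar>slope l\<bar> / \<bar>Q\<bar>" for \<xi>
    using box near_sync_in_box(2-4)[OF that] by blast
  then have window: "\<bar>diag_pd2 L f (line_point L (X l) \<xi> l) - 2 * Q\<bar> \<le> \<bar>Q\<bar> / 2"
    if "\<bar>\<xi> - X l\<bar> \<le> 2 * \<bar>slope l\<bar> / \<bar>Q\<bar>" for \<xi>
    using that by fastforce
  have "diag_pd1 L f (line_point L (X l) (X l) l) \<noteq> 0"
    using slope_ne by (simp add: slope_def)
  from second_zero_near[OF has_real_derivative_branch_eq has_real_derivative_slope_line sync_root
      this quad_nonzero window[unfolded slope_def]]
  obtain x where x: "branch_eq l x = 0" "x \<noteq> X l" "\<bar>x - X l\<bar> \<le> 2 * \<bar>slope l\<bar> / \<bar>Q\<bar>"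
    unfolding slope_def by blast
  obtain \<xi> where \<xi>: "min (X l) x \<le> \<xi>" "\<xi> \<le> max (X l) x"
    "slope l + diag_pd2 L f (line_point L (X l) \<xi> l) / 2 * (x - X l) = 0"
    using second_zero_offset[OF has_real_derivative_branch_eq has_real_derivative_slope_line sync_root x(1,2)]
    unfolding slope_def by blast
  have \<xi>_near: "\<bar>\<xi> - X l\<bar> \<le> 2 * \<bar>slope l\<bar> / \<bar>Q\<bar>"
    using abs_diff_le_if_between[OF \<xi>(1,2)] x(3) by linarith
  have "\<bar>x - X l + slope l / Q\<bar> \<le> \<bar>slope l\<bar> * (M * (\<bar>\<xi>\<bar> + \<bar>X l\<bar> + \<bar>l\<bar>)) / Q^2"
    using second_zero_offset_bound[OF \<xi>(3)] box_at[OF \<xi>_near] quad_nonzero by blast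
  also have "\<dots> \<le> (3/2 * (\<bar>c\<bar> * \<bar>l\<bar>)) * (M * ((2 * A + 3 * \<bar>c\<bar> / \<bar>Q\<bar> + 1) * \<bar>l\<bar>)) / Q^2"
    using slope_le near_sync_in_box(1)[OF \<xi>_near] \<open>M \<ge> 0\<close>
    by (intro divide_right_mono mult_mono mult_left_mono) auto
  also have "\<dots> = 3/2 * \<bar>c\<bar> * M * (2 * A + 3 * \<bar>c\<bar> / \<bar>Q\<bar> + 1) / Q^2 * l^2"
    by (simp add: power2_eq_square)
  finally show ?thesis
    using x(1,2) near_sync_in_box(2)[OF x(3)] by blast
qed

lemma second_zero_expansion:
  assumes sync_close: "\<bar>X l - coef_D f * l\<bar> \<le> CX * l^2" and slope_near: "\<bar>slope l - c * l\<bar> \<le> Cs * l^2"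
  shows "\<exists>x. \<bar>x\<bar> < \<delta> \<and> branch_eq l x = 0 \<and> x \<noteq> X l \<and> \<bar>x - (coef_D f - c / Q) * l\<bar>
           \<le> (\<bar>CX\<bar> + 3/2 * \<bar>c\<bar> * M * (2 * A + 3 * \<bar>c\<bar> / \<bar>Q\<bar> + 1) / Q^2 + \<bar>Cs\<bar> / \<bar>Q\<bar>) * l^2"
proof -
  define K where "K = 3/2 * \<bar>c\<bar> * M * (2 * A + 3 * \<bar>c\<bar> / \<bar>Q\<bar> + 1) / Q^2"
  obtain x where x: "branch_eq l x = 0" "x \<noteq> X l" "\<bar>x\<bar> < \<delta>"
    and offset: "\<bar>x - X l + slope l / Q\<bar> \<le> K * l^2"
    using second_zero_estimate unfolding K_def by blast
  have "x - (coef_D f - c / Q) * l = (X l - coef_D f * l) + (x - X l + slope l / Q) - (slope l - c * l) / Q"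
    using quad_nonzero by (simp add: field_simps)
  then have "\<bar>x - (coef_D f - c / Q) * l\<bar>
      = \<bar>(X l - coef_D f * l) + (x - X l + slope l / Q) - (slope l - c * l) / Q\<bar>"
    by (simp only:)
  also have "\<dots> \<le> \<bar>X l - coef_D f * l\<bar> + \<bar>x - X l + slope l / Q\<bar> + \<bar>slope l - c * l\<bar> / \<bar>Q\<bar>"
    using abs_divide[of "slope l - c * l" Q] by linarith
  also have "\<dots> \<le> \<bar>CX\<bar> * l^2 + K * l^2 + \<bar>Cs\<bar> * l^2 / \<bar>Q\<bar>"
    using sync_close slope_near offset
    by (intro add_mono divide_right_mono order_trans[OF _ mult_right_mono[OF abs_ge_self]]) auto
  finally show ?thesis
    using x unfolding K_def by (intro exI[of _ x]) (simp add: algebra_simps)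
qed

end

lemma second_branch:
  assumes box: "\<And>b y l. \<bar>b\<bar> < \<delta> \<Longrightarrow> \<bar>y\<bar> < \<delta> \<Longrightarrow> \<bar>l\<bar> < \<delta> \<Longrightarrow>
      \<bar>diag_pd2 L f (line_point L y b l) - 2 * Q\<bar> \<le> M * (\<bar>b\<bar> + \<bar>y\<bar> + \<bar>l\<bar>) \<and>
      M * (\<bar>b\<bar> + \<bar>y\<bar> + \<bar>l\<bar>) \<le> \<bar>Q\<bar> / 2"
    and "M \<ge> 0" and "\<delta> > 0"
  shows "\<exists>C. \<forall>\<^sub>F l in nhds 0. \<bar>l\<bar> < \<delta> \<and> \<bar>X l\<bar> < \<delta> \<and> branch_eq l (X l) = 0 \<and>
           (\<exists>x. \<bar>x\<bar> < \<delta> \<and> branch_eq l x = 0 \<and> (l \<noteq> 0 \<longrightarrow> x \<noteq> X l) \<and>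
                \<bar>x - (coef_D f - c / Q) * l\<bar> \<le> C * l^2)"
proof -
  obtain A where "A \<ge> 0" and XA: "\<forall>\<^sub>F l in nhds 0. \<bar>X l\<bar> \<le> A * \<bar>l\<bar>"
    using sync_linear_bound by blast
  obtain CX where XD: "\<forall>\<^sub>F l in nhds 0. \<bar>X l - coef_D f * l\<bar> \<le> CX * l^2"
    using sync_quadratic_bound by blast
  obtain Cs where SE: "\<forall>\<^sub>F l in nhds 0. \<bar>slope l - c * l\<bar> \<le> Cs * l^2"
    using slope_expansion by blast
  define W where "W = 2 * A + 3 * \<bar>c\<bar> / \<bar>Q\<bar> + 1"
  define C where "C = \<bar>CX\<bar> + 3/2 * \<bar>c\<bar> * M * W / Q^2 + \<bar>Cs\<bar> / \<bar>Q\<bar>"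
  have "\<forall>\<^sub>F l in nhds 0. \<bar>Cs\<bar> * \<bar>l\<bar> < \<bar>c\<bar> / 2"
    using c_nonzero by (intro eventually_mult_abs_less) simp
  moreover have "\<forall>\<^sub>F l in nhds 0. W * \<bar>l\<bar> < \<delta>"
    using \<open>\<delta> > 0\<close> by (rule eventually_mult_abs_less)
  ultimately have "\<forall>\<^sub>F l in nhds 0. \<bar>l\<bar> < \<delta> \<and> \<bar>X l\<bar> < \<delta> \<and> branch_eq l (X l) = 0 \<and>
      (\<exists>x. \<bar>x\<bar> < \<delta> \<and> branch_eq l x = 0 \<and> (l \<noteq> 0 \<longrightarrow> x \<noteq> X l) \<and> \<bar>x - (coef_D f - c / Q) * l\<bar> \<le> C * l^2)"
    using XA XD SE sync_zero
  proof eventually_elim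
    case (elim l)
    have "\<bar>l\<bar> \<le> W * \<bar>l\<bar>" "A * \<bar>l\<bar> \<le> W * \<bar>l\<bar>"
      using \<open>A \<ge> 0\<close> by (simp_all add: W_def mult_right_mono mult_le_cancel_right1)
    then have small: "\<bar>l\<bar> < \<delta>" "\<bar>X l\<bar> < \<delta>"
      using elim(2,3) by linarith+
    have root: "branch_eq l (X l) = 0"
      using elim(6) by (simp add: branch_eq_def)
    have "\<exists>x. \<bar>x\<bar> < \<delta> \<and> branch_eq l x = 0 \<and> (l \<noteq> 0 \<longrightarrow> x \<noteq> X l) \<and> \<bar>x - (coef_D f - c / Q) * l\<bar> \<le> C * l^2"
    proof (cases "l = 0")
      case True
      then show ?thesis
        using small root by (intro exI[of _ "X l"]) (simp add: sync_at_0)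
    next
      case False
      have "Cs * l^2 \<le> (\<bar>Cs\<bar> * \<bar>l\<bar>) * \<bar>l\<bar>"
        by (simp add: power2_eq_square mult.assoc mult_right_mono)
      also have "\<dots> \<le> \<bar>c\<bar> / 2 * \<bar>l\<bar>"
        using elim(1) by (intro mult_right_mono) auto
      finally have "\<bar>slope l - c * l\<bar> \<le> \<bar>c\<bar> * \<bar>l\<bar> / 2"
        using elim(5) by simp
      from second_zero_expansion[OF box \<open>M \<ge> 0\<close> \<open>A \<ge> 0\<close> elim(3) this elim(2)[unfolded W_def] False root elim(4,5)]
      show ?thesis
        unfolding C_def W_def by blast
    qed
    with small root show ?case
      by blast
  qed
  then show ?thesis
    by blast
qed

lemma transcritical_branches:
  "\<exists>\<epsilon>>0. \<exists>\<delta>>0. \<exists>xplus xminus :: real \<Rightarrow> real.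
     (\<forall>l. \<bar>l\<bar> < \<epsilon> \<longrightarrow>
         xplus l = X l \<and> \<bar>xplus l\<bar> < \<delta> \<and> \<bar>xminus l\<bar> < \<delta> \<and>
         (l \<noteq> 0 \<longrightarrow> xplus l \<noteq> xminus l) \<and>
         (\<forall>xp. \<bar>xp\<bar> < \<delta> \<longrightarrow> (branch_eq l xp = 0 \<longleftrightarrow> xp = xplus l \<or> xp = xminus l))) \<and>
     (\<lambda>l. xplus l - coef_D f * l) \<in> O[nhds 0](\<lambda>l. l^2) \<and>
     (\<lambda>l. xminus l - (coef_D f - c / Q) * l) \<in> O[nhds 0](\<lambda>l. l^2)"
proof -
  obtain \<delta> M where "\<delta> > 0" "M \<ge> 0" and box: "\<And>b y l. \<bar>b\<bar> < \<delta> \<Longrightarrow> \<bar>y\<bar> < \<delta> \<Longrightarrow> \<bar>l\<bar> < \<delta> \<Longrightarrow>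
      \<bar>diag_pd2 L f (line_point L y b l) - 2 * Q\<bar> \<le> M * (\<bar>b\<bar> + \<bar>y\<bar> + \<bar>l\<bar>) \<and>
      M * (\<bar>b\<bar> + \<bar>y\<bar> + \<bar>l\<bar>) \<le> \<bar>Q\<bar> / 2"
    using curvature_box by blast
  obtain C where "\<forall>\<^sub>F l in nhds 0. \<bar>l\<bar> < \<delta> \<and> \<bar>X l\<bar> < \<delta> \<and> branch_eq l (X l) = 0 \<and>
      (\<exists>x. \<bar>x\<bar> < \<delta> \<and> branch_eq l x = 0 \<and> (l \<noteq> 0 \<longrightarrow> x \<noteq> X l) \<and> \<bar>x - (coef_D f - c / Q) * l\<bar> \<le> C * l^2)"
    using second_branch[OF box \<open>M \<ge> 0\<close> \<open>\<delta> > 0\<close>] by blast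
  then obtain \<epsilon> where "\<epsilon> > 0" and near: "\<And>l. \<bar>l\<bar> < \<epsilon> \<Longrightarrow> \<bar>l\<bar> < \<delta> \<and> \<bar>X l\<bar> < \<delta> \<and> branch_eq l (X l) = 0 \<and>
      (\<exists>x. \<bar>x\<bar> < \<delta> \<and> branch_eq l x = 0 \<and> (l \<noteq> 0 \<longrightarrow> x \<noteq> X l) \<and> \<bar>x - (coef_D f - c / Q) * l\<bar> \<le> C * l^2)"
    unfolding eventually_nhds_metric dist_real_def by auto
  define xminus where "xminus l = (SOME x. \<bar>x\<bar> < \<delta> \<and> branch_eq l x = 0 \<and> (l \<noteq> 0 \<longrightarrow> x \<noteq> X l)
      \<and> \<bar>x - (coef_D f - c / Q) * l\<bar> \<le> C * l^2)" for l
  have xminus: "\<bar>xminus l\<bar> < \<delta> \<and> branch_eq l (xminus l) = 0 \<and> (l \<noteq> 0 \<longrightarrow> xminus l \<noteq> X l)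
      \<and> \<bar>xminus l - (coef_D f - c / Q) * l\<bar> \<le> C * l^2" if "\<bar>l\<bar> < \<epsilon>" for l
    unfolding xminus_def using near[OF that] by (elim conjE) (rule someI_ex)
  have nonzero: "diag_pd2 L f (line_point L y b l) \<noteq> 0" if "\<bar>b\<bar> < \<delta>" "\<bar>y\<bar> < \<delta>" "\<bar>l\<bar> < \<delta>" for b y l
    using box[OF that] quad_nonzero by auto
  have unique: "xp = X l \<or> xp = xminus l" if "\<bar>l\<bar> < \<epsilon>" "\<bar>xp\<bar> < \<delta>" "branch_eq l xp = 0" for l xp
  proof (rule zeros_within_pair[OF has_real_derivative_branch_eq has_real_derivative_slope_line])
    show "diag_pd2 L f (line_point L (X l) t l) \<noteq> 0" if "\<bar>t\<bar> < \<delta>" for t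
      using nonzero[OF that] near[OF \<open>\<bar>l\<bar> < \<epsilon>\<close>] by blast
    show "xminus l \<noteq> X l \<or> diag_pd1 L f (line_point L (X l) (X l) l) = 0"
      using xminus[OF \<open>\<bar>l\<bar> < \<epsilon>\<close>] slope_at_0 by (cases "l = 0") (auto simp: slope_def)
  qed (use that near xminus in blast)+
  have "\<forall>l. \<bar>l\<bar> < \<epsilon> \<longrightarrow> X l = X l \<and> \<bar>X l\<bar> < \<delta> \<and> \<bar>xminus l\<bar> < \<delta> \<and> (l \<noteq> 0 \<longrightarrow> X l \<noteq> xminus l) \<and>
      (\<forall>xp. \<bar>xp\<bar> < \<delta> \<longrightarrow> (branch_eq l xp = 0 \<longleftrightarrow> xp = X l \<or> xp = xminus l))"
    using near xminus unique by metis
  moreover have "(\<lambda>l. xminus l - (coef_D f - c / Q) * l) \<in> O[nhds 0](\<lambda>l. l^2)"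
  proof (rule bigoI)
    show "\<forall>\<^sub>F l in nhds 0. norm (xminus l - (coef_D f - c / Q) * l) \<le> C * norm (l^2)"
      unfolding eventually_nhds_metric dist_real_def using \<open>\<epsilon> > 0\<close> xminus by auto
  qed
  ultimately show ?thesis
    using \<open>\<epsilon> > 0\<close> \<open>\<delta> > 0\<close> sync_expansion by blast
qed

end

section \<open>Genericity\<close>

lemma pd_add_scaled:
  assumes "has_pd v g x l" "has_pd v h x l"
  shows "pd v (\<lambda>x l. g x l + c * h x l) x l = pd v g x l + c * pd v h x l"
    and "has_pd v (\<lambda>x l. g x l + c * h x l) x l"
proof -
  have *: "deriv (\<lambda>t. G t + c * H t) 0 = deriv G 0 + c * deriv H 0 \<and> (\<lambda>t. G t + c * H t) differentiable (at 0)"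
    if "G differentiable (at 0)" "H differentiable (at 0)" for G H :: "real \<Rightarrow> real"
  proof -
    have "(G has_real_derivative deriv G 0) (at 0)" "(H has_real_derivative deriv H 0) (at 0)"
      using that by (simp_all add: DERIV_deriv_iff_real_differentiable)
    then have "((\<lambda>t. G t + c * H t) has_real_derivative deriv G 0 + c * deriv H 0) (at 0)"
      by (auto intro!: derivative_eq_intros)
    then show ?thesis
      using DERIV_imp_deriv real_differentiable_def by blast
  qed
  show "pd v (\<lambda>x l. g x l + c * h x l) x l = pd v g x l + c * pd v h x l"
    and "has_pd v (\<lambda>x l. g x l + c * h x l) x l"
    using assms * by (cases v; simp add: pd_def has_pd_def)+
qed

definition add_scaled :: "(real^'s::finite \<Rightarrow> real \<Rightarrow> real) \<Rightarrow> real \<Rightarrow> (real^'s \<Rightarrow> real \<Rightarrow> real) \<Rightarrow> (real^'s \<Rightarrow> real \<Rightarrow> real)" where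
  "add_scaled g c h = (\<lambda>x l. g x l + c * h x l)"

lemma pds_add_scaled:
  assumes "smooth_fun g" "smooth_fun h"
  shows "pds vs (add_scaled g c h) = add_scaled (pds vs g) c (pds vs h)"
  unfolding add_scaled_def
proof (induction vs)
  case Nil
  then show ?case by (simp add: pds_def)
next
  case (Cons v vs)
  have "pds (v # vs) (\<lambda>x l. g x l + c * h x l) = pd v (\<lambda>x l. pds vs g x l + c * pds vs h x l)"
    by (simp add: pds_def Cons[unfolded pds_def])
  also have "\<dots> = (\<lambda>x l. pd v (pds vs g) x l + c * pd v (pds vs h) x l)"
    using assms by (intro ext pd_add_scaled(1)) (auto simp: smooth_fun_def)
  finally show ?case
    by (simp add: pds_def)
qed

lemma smooth_add_scaled:
  assumes "smooth_fun g" "smooth_fun h"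
  shows "smooth_fun (add_scaled g c h)"
  unfolding smooth_fun_def pds_add_scaled[OF assms] unfolding add_scaled_def
proof (intro allI conjI)
  fix vs
  have "continuous_on UNIV (\<lambda>z. pds vs g (fst z) (snd z))" "continuous_on UNIV (\<lambda>z. pds vs h (fst z) (snd z))"
    using assms by (simp_all add: smooth_fun_def case_prod_beta')
  then show "continuous_on UNIV (\<lambda>(x, l). pds vs g x l + c * pds vs h x l)"
    by (simp add: case_prod_beta') (intro continuous_intros)
  show "has_pd v (\<lambda>x l. pds vs g x l + c * pds vs h x l) x l" for v x l
    using assms by (intro pd_add_scaled(2)) (auto simp: smooth_fun_def)
qed

lemma taylor_add_scaled:
  assumes "smooth_fun g" "smooth_fun h"
  shows "taylor (add_scaled g c h) = (\<lambda>vs. taylor g vs + c * taylor h vs)"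
  unfolding taylor_def pds_add_scaled[OF assms] by (simp add: add_scaled_def)

text \<open>These polynomials are closed under partial derivatives, so they are smooth with explicit
  Taylor data.\<close>

definition test_poly :: "'s::finite \<Rightarrow> real \<Rightarrow> real \<Rightarrow> real \<Rightarrow> real \<Rightarrow> real \<Rightarrow> (real^'s \<Rightarrow> real \<Rightarrow> real)" where
  "test_poly i0 a b c d e = (\<lambda>x l. a + b * x$i0 + c * (x$i0)^2 + d * l + e * x$i0 * l)"

lemma has_real_derivative_test_poly_Some:
  "((\<lambda>t. test_poly i0 a b c d e (x + t *\<^sub>R axis i 1) l) has_real_derivative
     (if i = i0 then b + 2 * c * x$i0 + e * l else 0)) (at 0)"
proof -
  have "(\<lambda>t. test_poly i0 a b c d e (x + t *\<^sub>R axis i 1) l) =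
     (\<lambda>t. test_poly i0 a b c d e x l + (if i = i0 then t * (b + 2 * c * x$i0 + e * l) + c * t^2 else 0))"
    by (auto simp: test_poly_def fun_eq_iff axis_def power2_eq_square algebra_simps)
  then show ?thesis
    by (cases "i = i0") (auto intro!: derivative_eq_intros)
qed

lemma has_real_derivative_test_poly_None:
  "((\<lambda>t. test_poly i0 a b c d e x (l + t)) has_real_derivative (d + e * x$i0)) (at 0)"
proof -
  have "(\<lambda>t. test_poly i0 a b c d e x (l + t)) = (\<lambda>t. test_poly i0 a b c d e x l + t * (d + e * x$i0))"
    by (auto simp: test_poly_def fun_eq_iff algebra_simps)
  then show ?thesis
    by (auto intro!: derivative_eq_intros)
qed

lemma pd_test_poly:
  "pd (Some i) (test_poly i0 a b c d e) = (if i = i0 then test_poly i0 b (2 * c) 0 e 0 else test_poly i0 0 0 0 0 0)"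
  "pd None (test_poly i0 a b c d e) = test_poly i0 d e 0 0 0"
  unfolding pd_def option.case DERIV_imp_deriv[OF has_real_derivative_test_poly_Some]
    DERIV_imp_deriv[OF has_real_derivative_test_poly_None]
  by (auto simp: fun_eq_iff test_poly_def)

lemma pds_test_poly: "\<exists>a' b' c' d' e'. pds vs (test_poly i0 a b c d e) = test_poly i0 a' b' c' d' e'"
proof (induction vs)
  case Nil
  show ?case
    unfolding pds_def foldr.simps id_def by (intro exI) (rule refl)
next
  case (Cons v vs)
  then obtain a' b' c' d' e' where "pds vs (test_poly i0 a b c d e) = test_poly i0 a' b' c' d' e'"
    by blast
  then show ?case
    by (cases v; auto simp: pds_def pd_test_poly; blast)
qed

lemma smooth_test_poly: "smooth_fun (test_poly i0 a b c d e)"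
  unfolding smooth_fun_def
proof (intro allI conjI)
  fix vs
  obtain a' b' c' d' e' where eq: "pds vs (test_poly i0 a b c d e) = test_poly i0 a' b' c' d' e'"
    using pds_test_poly by blast
  show "continuous_on UNIV (\<lambda>(x, l). pds vs (test_poly i0 a b c d e) x l)"
    unfolding eq unfolding test_poly_def case_prod_beta' by (intro continuous_intros)
  show "has_pd v (pds vs (test_poly i0 a b c d e)) x l" for v x l
    unfolding eq
    by (cases v) (auto simp: has_pd_def real_differentiable_def
        intro: has_real_derivative_test_poly_Some has_real_derivative_test_poly_None)
qed

lemma taylor_test_poly:
  "taylor (test_poly i0 a b c d e) [Some i] = (if i = i0 then b else 0)"
  "taylor (test_poly i0 a b c d e) [None] = d"
  "taylor (test_poly i0 a b c d e) [Some i, Some j] = (if i = i0 \<and> j = i0 then 2 * c else 0)"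
  "taylor (test_poly i0 a b c d e) [Some i, None] = (if i = i0 then e else 0)"
  by (simp_all add: taylor_def pds_def pd_test_poly) (simp_all add: test_poly_def)

definition taylor_Q :: "'s set \<Rightarrow> ('s option list \<Rightarrow> real) \<Rightarrow> real" where
  "taylor_Q L t = (\<Sum>i\<in>L. \<Sum>j\<in>L. t [Some i, Some j] / 2)"

definition taylor_S :: "'s set \<Rightarrow> ('s option list \<Rightarrow> real) \<Rightarrow> real" where
  "taylor_S L t = (\<Sum>i\<in>L. \<Sum>j\<in>-L. t [Some i, Some j] / 2)"

definition taylor_F :: "'s set \<Rightarrow> ('s option list \<Rightarrow> real) \<Rightarrow> real" where
  "taylor_F L t = (\<Sum>i\<in>L. t [Some i, None])"

definition taylor_K :: "('s::finite option list \<Rightarrow> real) \<Rightarrow> real" where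
  "taylor_K t = (\<Sum>i\<in>UNIV. t [Some i])"

definition taylor_l :: "('s option list \<Rightarrow> real) \<Rightarrow> real" where
  "taylor_l t = t [None]"

text \<open>The third expression is K c, with c the coefficient in the slope D - c / Q of the second
  branch.\<close>

definition nondegenerate :: "'s::finite set \<Rightarrow> ('s option list \<Rightarrow> real) set" where
  "nondegenerate L = {t. taylor_Q L t \<noteq> 0 \<and> taylor_K t \<noteq> 0 \<and>
     taylor_K t * taylor_F L t - 2 * taylor_l t * (taylor_Q L t + taylor_S L t) \<noteq> 0}"

lemma open_nondegenerate: "open (nondegenerate L)"
proof -
  have coord: "continuous_on UNIV (\<lambda>t :: 's option list \<Rightarrow> real. t vs)" for vs
    by (rule continuous_on_product_coordinates)
  have "continuous_on UNIV (taylor_Q L)" "continuous_on UNIV taylor_K"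
    "continuous_on UNIV (\<lambda>t. taylor_K t * taylor_F L t - 2 * taylor_l t * (taylor_Q L t + taylor_S L t))"
    unfolding taylor_Q_def taylor_S_def taylor_F_def taylor_K_def taylor_l_def
    by (auto intro!: continuous_intros coord)
  from this[THEN open_Collect_neq[OF _ continuous_on_const]] show ?thesis
    unfolding nondegenerate_def Collect_conj_eq by (intro open_Int)
qed

lemma taylor_functionals_taylor:
  "taylor_Q L (taylor f) = (\<Sum>i\<in>L. \<Sum>j\<in>L. coef_ff f i j)"
  "taylor_S L (taylor f) = (\<Sum>i\<in>L. \<Sum>j\<in>-L. coef_ff f i j)"
  "taylor_F L (taylor f) = (\<Sum>i\<in>L. coef_fl f i)"
  "taylor_K (taylor f) = coef_K f"
  "taylor_l (taylor f) = coef_l f"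
  by (simp_all add: taylor_Q_def taylor_S_def taylor_F_def taylor_K_def taylor_l_def taylor_def
      coef_ff_def coef_fl_def coef_K_def coef_a_def coef_l_def)

text \<open>Adding a0 x_i1 + a x_i0^2 + b x_i0 l shifts K by a0, Q by a and the mixed sum F by b,
  while keeping f(0,0), the sum S and the criticality of p (for i0 in L, i1 not in L).\<close>

definition perturbation :: "'s \<Rightarrow> 's \<Rightarrow> real \<times> real \<times> real \<Rightarrow> (real^'s::finite \<Rightarrow> real \<Rightarrow> real)
    \<Rightarrow> (real^'s \<Rightarrow> real \<Rightarrow> real)" where
  "perturbation i0 i1 z f = add_scaled (add_scaled (add_scaled f (fst z) (test_poly i1 0 1 0 0 0))
     (fst (snd z)) (test_poly i0 0 0 1 0 0)) (snd (snd z)) (test_poly i0 0 0 0 0 1)"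

lemma smooth_perturbation: "smooth_fun f \<Longrightarrow> smooth_fun (perturbation i0 i1 z f)"
  unfolding perturbation_def by (intro smooth_add_scaled smooth_test_poly)

lemma taylor_perturbation:
  assumes "smooth_fun f"
  shows "taylor (perturbation i0 i1 z f) = (\<lambda>vs. taylor f vs + fst z * taylor (test_poly i1 0 1 0 0 0) vs
     + fst (snd z) * taylor (test_poly i0 0 0 1 0 0) vs + snd (snd z) * taylor (test_poly i0 0 0 0 0 1) vs)"
  using assms unfolding perturbation_def
  by (simp add: taylor_add_scaled smooth_add_scaled smooth_test_poly)

lemma perturbation_at_0: "perturbation i0 i1 z f 0 0 = f 0 0"
  by (simp add: perturbation_def add_scaled_def test_poly_def)

lemma taylor_perturbation_low_order:
  fixes i0 i1 :: "'s::finite" and a0 a b :: real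
  assumes "smooth_fun f"
  defines "t \<equiv> taylor (perturbation i0 i1 (a0, a, b) f)"
  shows "t [Some i] = taylor f [Some i] + (if i = i1 then a0 else 0)"
    and "t [None] = taylor f [None]"
    and "t [Some i, Some j] / 2 = taylor f [Some i, Some j] / 2 + (if j = i0 then if i = i0 then a else 0 else 0)"
    and "t [Some i, None] = taylor f [Some i, None] + (if i = i0 then b else 0)"
  unfolding t_def taylor_perturbation[OF assms(1)] by (simp_all add: taylor_test_poly add_divide_distrib)

lemma coef_a_perturbation:
  assumes "smooth_fun f"
  shows "coef_a (perturbation i0 i1 (a0, a, b) f) i = coef_a f i + (if i = i1 then a0 else 0)"
  using taylor_perturbation_low_order(1)[OF assms] by (simp add: coef_a_def taylor_def)

lemma taylor_functionals_perturbation: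
  fixes i0 i1 :: "'s::finite" and a0 a b :: real
  assumes "smooth_fun f" and "i0 \<in> L"
  defines "t \<equiv> taylor (perturbation i0 i1 (a0, a, b) f)"
  shows "taylor_K t = taylor_K (taylor f) + a0" and "taylor_l t = taylor_l (taylor f)"
    and "taylor_Q L t = taylor_Q L (taylor f) + a" and "taylor_S L t = taylor_S L (taylor f)"
    and "taylor_F L t = taylor_F L (taylor f) + b"
  using \<open>i0 \<in> L\<close> unfolding t_def
  by (simp_all add: taylor_K_def taylor_l_def taylor_Q_def taylor_S_def taylor_F_def
      taylor_perturbation_low_order[OF assms(1)] sum.distrib)

lemma exists_small_nondegenerate:
  fixes K Q S F l r :: real
  assumes "r > 0"
  shows "\<exists>a0 a b. \<bar>a0\<bar> \<le> r \<and> \<bar>a\<bar> \<le> r \<and> \<bar>b\<bar> \<le> r \<and> K + a0 \<noteq> 0 \<and> Q + a \<noteq> 0 \<and>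
           (K + a0) * (F + b) - 2 * l * (Q + a + S) \<noteq> 0"
proof -
  define a0 where "a0 = (if K + r \<noteq> 0 then r else r / 2)"
  define a where "a = (if Q + r \<noteq> 0 then r else r / 2)"
  define P where "P b = (K + a0) * (F + b) - 2 * l * (Q + a + S)" for b
  define b where "b = (if P r \<noteq> 0 then r else r / 2)"
  have "K + a0 \<noteq> 0" "Q + a \<noteq> 0"
    using assms by (auto simp: a0_def a_def)
  moreover have "P b \<noteq> 0"
  proof (cases "P r = 0")
    case True
    have "P (r / 2) = P r - (K + a0) * (r / 2)"
      by (simp add: P_def algebra_simps)
    with True \<open>K + a0 \<noteq> 0\<close> assms show ?thesis
      by (simp add: b_def)
  qed (simp add: b_def)
  moreover have "\<bar>a0\<bar> \<le> r" "\<bar>a\<bar> \<le> r" "\<bar>b\<bar> \<le> r"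
    using assms by (auto simp: a0_def a_def b_def)
  ultimately show ?thesis
    unfolding P_def by blast
qed

lemma critical_iff_Lset: "Lset sig q = Lset sig r \<Longrightarrow> critical sig f q \<longleftrightarrow> critical sig f r"
  by (simp add: critical_def)

lemma assumption_B_iff: "assumption_B sig f \<longleftrightarrow> f 0 0 = 0 \<and> (\<exists>p. critical sig f p)"
  unfolding assumption_B_def using critical_iff_Lset by metis

lemma Lset_maximal: "maximal_cell sig q \<Longrightarrow> Lset sig q = UNIV"
  by (auto simp: maximal_cell_def Lset_def)

lemma perturbation_admissible:
  fixes sig :: "'s::finite \<Rightarrow> 'c \<Rightarrow> 'c" and a0 a b :: real
  assumes "i0 \<in> Lset sig p" "i1 \<notin> Lset sig p"
    and "smooth_fun f" "f 0 0 = 0" "critical sig f p" and "coef_K f + a0 \<noteq> 0"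
  defines "g \<equiv> perturbation i0 i1 (a0, a, b) f"
  shows "smooth_fun g \<and> assumption_B sig g \<and> critical sig g p \<and> (\<forall>q. maximal_cell sig q \<longrightarrow> \<not> critical sig g q)"
proof (intro conjI allI impI)
  show "smooth_fun g"
    unfolding g_def using assms(3) by (rule smooth_perturbation)
  have coef_a: "coef_a g i = coef_a f i + (if i = i1 then a0 else 0)" for i
    unfolding g_def by (rule coef_a_perturbation[OF assms(3)])
  show "critical sig g p"
    using assms(2,5) by (simp add: critical_def coef_a sum.distrib)
  then show "assumption_B sig g"
    using assms(4) by (auto simp: assumption_B_iff g_def perturbation_at_0)
  fix q assume "maximal_cell sig q"
  then show "\<not> critical sig g q"
    using assms(6) by (simp add: critical_def Lset_maximal coef_a sum.distrib coef_K_def)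
qed

lemma taylor_in_closure_nondegenerate:
  fixes sig :: "'s::finite \<Rightarrow> 'c \<Rightarrow> 'c" and f :: "real^'s \<Rightarrow> real \<Rightarrow> real"
  assumes i0: "i0 \<in> Lset sig p" and i1: "i1 \<notin> Lset sig p"
    and "smooth_fun f" "f 0 0 = 0" "critical sig f p"
  shows "taylor f \<in> closure (nondegenerate (Lset sig p) \<inter> taylor ` {g. smooth_fun g \<and> assumption_B sig g \<and>
           critical sig g p \<and> (\<forall>q. maximal_cell sig q \<longrightarrow> \<not> critical sig g q)})"
  unfolding closure_iff_nhds_not_empty
proof (intro allI impI)
  fix B U assume "U \<subseteq> B" "open U" "taylor f \<in> U"
  define \<Phi> where "\<Phi> z = taylor (perturbation i0 i1 z f)" for z
  have "continuous_on UNIV \<Phi>"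
    unfolding \<Phi>_def taylor_perturbation[OF assms(3)]
    by (intro continuous_on_coordinatewise_then_product continuous_intros)
  then have "open (\<Phi> -` U)" "0 \<in> \<Phi> -` U"
    using \<open>open U\<close> \<open>taylor f \<in> U\<close> by (auto intro: open_vimage simp: \<Phi>_def taylor_perturbation[OF assms(3)])
  then obtain r where "r > 0" and ball: "ball 0 r \<subseteq> \<Phi> -` U"
    using open_contains_ball by blast
  obtain a0 a b where small: "\<bar>a0\<bar> \<le> r / 4" "\<bar>a\<bar> \<le> r / 4" "\<bar>b\<bar> \<le> r / 4"
    and nondeg: "coef_K f + a0 \<noteq> 0" "taylor_Q (Lset sig p) (taylor f) + a \<noteq> 0"
      "(coef_K f + a0) * (taylor_F (Lset sig p) (taylor f) + b)
         - 2 * coef_l f * (taylor_Q (Lset sig p) (taylor f) + a + taylor_S (Lset sig p) (taylor f)) \<noteq> 0"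
    using exists_small_nondegenerate[of "r / 4"] \<open>r > 0\<close> by (metis divide_pos_pos zero_less_numeral)
  have "norm (a0, a, b) \<le> \<bar>a0\<bar> + (\<bar>a\<bar> + \<bar>b\<bar>)"
    using norm_Pair_le[of a0 "(a, b)"] norm_Pair_le[of a b] by simp
  then have "norm (a0, a, b) < r"
    using small \<open>r > 0\<close> by linarith
  then have "\<Phi> (a0, a, b) \<in> U"
    using ball by (auto simp: subset_eq)
  moreover have "\<Phi> (a0, a, b) \<in> nondegenerate (Lset sig p)"
    using nondeg unfolding \<Phi>_def nondegenerate_def mem_Collect_eq taylor_functionals_perturbation[OF assms(3) i0]
    by (simp add: taylor_functionals_taylor algebra_simps)
  moreover have "\<Phi> (a0, a, b) \<in> taylor ` {g. smooth_fun g \<and> assumption_B sig g \<and>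
           critical sig g p \<and> (\<forall>q. maximal_cell sig q \<longrightarrow> \<not> critical sig g q)}"
    unfolding \<Phi>_def using perturbation_admissible[OF i0 i1 assms(3-5) nondeg(1)] by blast
  ultimately show "nondegenerate (Lset sig p) \<inter> taylor ` {g. smooth_fun g \<and> assumption_B sig g \<and>
           critical sig g p \<and> (\<forall>q. maximal_cell sig q \<longrightarrow> \<not> critical sig g q)} \<inter> B \<noteq> {}"
    using \<open>U \<subseteq> B\<close> by blast
qed

lemma below_arrow:
  assumes "sig i p \<noteq> p"
  shows "below sig p (sig i p)"
  unfolding below_def is_path_def
proof (intro exI[of _ "[sig i p, p]"] conjI)
  show "\<forall>j. Suc j < length [sig i p, p] \<longrightarrow> (\<exists>i'. sig i' ([sig i p, p] ! Suc j) = [sig i p, p] ! j)"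
    by (auto simp: less_Suc_eq)
qed (use assms in auto)

lemma peq_eq: "peq sig f X p xp l = f (\<chi> i. if i \<in> Lset sig p then xp else X l) l"
proof -
  have "(\<chi> i. ((\<lambda>q. if below sig p q \<and> q \<noteq> p then X l else 0)(p := xp)) (sig i p))
      = (\<chi> i. if i \<in> Lset sig p then xp else X l)"
    by (auto simp: vec_eq_iff Lset_def below_arrow)
  then show ?thesis
    by (simp add: peq_def gamma_def)
qed

lemma transcritical_conclusion_if_nondegenerate:
  fixes sig :: "'s::finite \<Rightarrow> 'c \<Rightarrow> 'c"
  assumes smooth: "smooth_fun f" and crit: "critical sig f p"
    and nondeg: "taylor f \<in> nondegenerate (Lset sig p)"
  shows "transcritical_conclusion sig f p"
  unfolding transcritical_conclusion_def
proof (intro allI impI, elim conjE exE)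
  fix X :: "real \<Rightarrow> real" and \<eta> :: real
  assume "\<eta> > 0" "\<forall>l. \<bar>l\<bar> < \<eta> \<longrightarrow> f (\<chi> i. X l) l = 0"
    and expansion: "(\<lambda>l. X l - coef_D f * l - coef_R f * l^2) \<in> O[nhds 0](\<lambda>l. l^3)"
  define L where "L = Lset sig p"
  have Q: "(\<Sum>i\<in>L. \<Sum>j\<in>L. coef_ff f i j) \<noteq> 0" and "coef_K f \<noteq> 0"
    and P: "coef_K f * (\<Sum>i\<in>L. coef_fl f i) - 2 * coef_l f * ((\<Sum>i\<in>L. \<Sum>j\<in>L. coef_ff f i j)
        + (\<Sum>i\<in>L. \<Sum>j\<in>-L. coef_ff f i j)) \<noteq> 0"
    using nondeg by (simp_all add: nondegenerate_def taylor_functionals_taylor L_def)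
  have "coef_K f * (2 * coef_D f * ((\<Sum>i\<in>L. \<Sum>j\<in>L. coef_ff f i j) + (\<Sum>i\<in>L. \<Sum>j\<in>-L. coef_ff f i j))
      + (\<Sum>i\<in>L. coef_fl f i)) = coef_K f * (\<Sum>i\<in>L. coef_fl f i) - 2 * coef_l f * ((\<Sum>i\<in>L. \<Sum>j\<in>L. coef_ff f i j)
        + (\<Sum>i\<in>L. \<Sum>j\<in>-L. coef_ff f i j))"
    using \<open>coef_K f \<noteq> 0\<close> by (simp add: coef_D_def field_simps)
  with P have "coef_K f * (2 * coef_D f * ((\<Sum>i\<in>L. \<Sum>j\<in>L. coef_ff f i j) + (\<Sum>i\<in>L. \<Sum>j\<in>-L. coef_ff f i j))
      + (\<Sum>i\<in>L. coef_fl f i)) \<noteq> 0"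
    by simp
  then interpret transcritical_cell f L X
    using smooth crit Q \<open>\<eta> > 0\<close> \<open>\<forall>l. \<bar>l\<bar> < \<eta> \<longrightarrow> _\<close> bigo_quadratic_if_cubic_remainder[OF expansion]
    by unfold_locales (auto simp: critical_def L_def eventually_nhds_metric dist_real_def)
  have "Dplus f = coef_D f"
    by (simp add: Dplus_def coef_D_def)
  moreover have "Dminus sig f p = coef_D f - c / Q"
    using Q \<open>coef_K f \<noteq> 0\<close> by (simp add: Dminus_def Let_def L_def[symmetric] coef_D_def field_simps)
  moreover have "peq sig f X p xp l = branch_eq l xp" for xp l
    by (simp add: peq_eq branch_eq_def) (simp add: L_def)
  ultimately show "\<exists>\<epsilon>>0. \<exists>\<delta>>0. \<exists>xplus xminus. (\<forall>l. \<bar>l\<bar> < \<epsilon> \<longrightarrow>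
         xplus l = X l \<and> \<bar>xplus l\<bar> < \<delta> \<and> \<bar>xminus l\<bar> < \<delta> \<and> (l \<noteq> 0 \<longrightarrow> xplus l \<noteq> xminus l) \<and>
         (\<forall>xp. \<bar>xp\<bar> < \<delta> \<longrightarrow> (peq sig f X p xp l = 0 \<longleftrightarrow> xp = xplus l \<or> xp = xminus l))) \<and>
       (\<lambda>l. xplus l - Dplus f * l) \<in> O[nhds 0](\<lambda>l. l^2) \<and>
       (\<lambda>l. xminus l - Dminus sig f p * l) \<in> O[nhds 0](\<lambda>l. l^2)"
    using transcritical_branches by simp
qed

theorem lemma4p14:
  fixes sig :: "'s::finite \<Rightarrow> 'c::finite \<Rightarrow> 'c" and p :: 'c
  assumes "inj sig"
    and "\<exists>i. sig i = id"
    and "feedforward sig"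
    and "\<not> maximal_cell sig p"
  shows "generically
           (\<lambda>f. smooth_fun f \<and> assumption_B sig f \<and> critical sig f p \<and>
                (\<forall>q. maximal_cell sig q \<longrightarrow> \<not> critical sig f q))
           (\<lambda>f. transcritical_conclusion sig f p)"
proof -
  obtain i0 where "sig i0 = id"
    using assms(2) by blast
  then have i0: "i0 \<in> Lset sig p"
    by (simp add: Lset_def)
  obtain i1 where "sig i1 p \<noteq> p"
    using assms(4) by (auto simp: maximal_cell_def)
  then have i1: "i1 \<notin> Lset sig p"
    by (simp add: Lset_def)
  let ?A = "\<lambda>f. smooth_fun f \<and> assumption_B sig f \<and> critical sig f p \<and> (\<forall>q. maximal_cell sig q \<longrightarrow> \<not> critical sig f q)"
  have dense: "taylor f \<in> closure (nondegenerate (Lset sig p) \<inter> taylor ` {g. ?A g})" if "?A f" for f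
    using that taylor_in_closure_nondegenerate[OF i0 i1, of f] by (simp add: assumption_B_iff)
  have conclusion: "transcritical_conclusion sig f p" if "?A f" "taylor f \<in> nondegenerate (Lset sig p)" for f
    using that(1) by (intro transcritical_conclusion_if_nondegenerate[OF _ _ that(2)]) simp_all
  show ?thesis
    unfolding generically_def
  proof (intro exI[of _ "nondegenerate (Lset sig p)"] conjI allI impI)
    show "open (nondegenerate (Lset sig p))"
      by (rule open_nondegenerate)
  qed (simp_all add: dense conclusion)
qed

end
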